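(* Let $R$ be a localizable archimedean partially ordered commutative ring and $\varphi\in\mathcal{K}(R)$. Then $\operatorname{dom}\widehat\varphi$ is a subring of $R$ and $\widehat\varphi\colon\operatorname{dom}\widehat\varphi\to\mathbb{R}$ is a positive ring morphism. Moreover, if $r\in R$ and $s\in\operatorname{dom}\widehat\varphi\cap\mathrm{Loc}(R)$ satisfy $r/s\in R^{\mathrm{bd}}_{\mathrm{loc}}$, then $r\in\operatorname{dom}\widehat\varphi$.
   Context: Rings are commutative with unit; subrings contain $1$; ring morphisms are unital. A partially ordered commutative ring is a commutative ring $R$ with partial order $\le$, $r\le s\Rightarrow r+t\le s+t$, positive cone $R^+$ closed under multiplication and containing all squares. $\mathbb{N}=\{1,2,\dots\}$, $\mathbb{N}_0=\mathbb{N}\cup\{0\}$. Archimedean: $kg+h\in R^+$ for all $k\in\mathbb{N}$ implies $g\in R^+$. $\mathrm{Loc}(R)$: the $s\in1+R^+$ with $rs\in R^+\Rightarrow r\in R^+$ for all $r$; localizable: each $r$ satisfies $-s\le r\le s$ for some $s\in\mathrm{Loc}(R)$. A ring morphism into $\mathbb{R}$ is positive if it maps $R^+$ (here $(\operatorname{dom}\widehat\varphi)\cap R^+$) into $[0,\infty)$. $\mathscr{C}_{\mathrm{a.e.}}(X)$ for a topological space $X$: continuous real functions defined on dense open subsets of $X$, modulo agreement on a dense open subset of the common domain, with pointwise operations on the intersection of domains. Each $a\in\mathscr{C}_{\mathrm{a.e.}}(X)$ has a unique representative $a_{\max}$ whose domain contains the domain of every representative and which restricts to each representative. $R_{\mathrm{loc}}$: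 fractions $r/s$ ($r\in R$, $s\in\mathrm{Loc}(R)$), $r/s=r'/s'$ iff $rs'=r's$, ordered by $p/q\le r/s$ iff $ps\le rq$. $R^{\mathrm{bd}}_{\mathrm{loc}}=\{a:\exists n\in\mathbb{N}_0,\ -n\le a\le n\}$. $\mathcal{K}(R)$: ring morphisms $\psi\colon R^{\mathrm{bd}}_{\mathrm{loc}}\to\mathbb{R}$ with $\psi(a)\ge0$ for $a\ge0$, weak-$*$ topology. $\mathrm{O}_{s<\infty}=\{\psi:\psi(1/s)>0\}$; for archimedean localizable $R$ these are dense open in $\mathcal{K}(R)$. For $r\in R$, $\widehat r\in\mathscr{C}_{\mathrm{a.e.}}(\mathcal{K}(R))$ is the class of $r_s\colon\mathrm{O}_{s<\infty}\to\mathbb{R}$, $\psi\mapsto\psi(1/s)^{-1}\psi(r/s)$, for any $s\in\mathrm{Loc}(R)$ with $r/s\in R^{\mathrm{bd}}_{\mathrm{loc}}$ (independent of $s$). Define $\operatorname{dom}\widehat\varphi=\{r\in R:\varphi\in\operatorname{dom}\widehat r_{\max}\}$ and $\widehat\varphi(r)=\widehat r_{\max}(\varphi)$ for $r\in\operatorname{dom}\widehat\varphi$. *)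

theory Defs
  imports "HOL-Analysis.Analysis"
begin

definition po_ring :: "('a::comm_ring_1 \<Rightarrow> 'a \<Rightarrow> bool) \<Rightarrow> bool" where
  "po_ring le \<longleftrightarrow>
     (\<forall>r. le r r) \<and> (\<forall>r s. le r s \<and> le s r \<longrightarrow> r = s) \<and>
     (\<forall>r s t. le r s \<and> le s t \<longrightarrow> le r t) \<and>
     (\<forall>r s t. le r s \<longrightarrow> le (r + t) (s + t)) \<and>
     (\<forall>a b. le 0 a \<and> le 0 b \<longrightarrow> le 0 (a * b)) \<and>
     (\<forall>a. le 0 (a * a))"

definition archimedean_po :: "('a::comm_ring_1 \<Rightarrow> 'a \<Rightarrow> bool) \<Rightarrow> bool" where
  "archimedean_po le \<longleftrightarrow>
     (\<forall>g h. (\<forall>k::nat. k \<ge> 1 \<longrightarrow> le 0 (of_nat k * g + h)) \<longrightarrow> le 0 g)"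

definition Loc :: "('a::comm_ring_1 \<Rightarrow> 'a \<Rightarrow> bool) \<Rightarrow> 'a set" where
  "Loc le = {s. le 0 (s - 1) \<and> (\<forall>r. le 0 (r * s) \<longrightarrow> le 0 r)}"

definition localizable :: "('a::comm_ring_1 \<Rightarrow> 'a \<Rightarrow> bool) \<Rightarrow> bool" where
  "localizable le \<longleftrightarrow> (\<forall>r. \<exists>s\<in>Loc le. le (- s) r \<and> le r s)"

section \<open>The localization R_loc, via representatives (r, s) standing for r/s\<close>

definition locfrac :: "('a::comm_ring_1 \<Rightarrow> 'a \<Rightarrow> bool) \<Rightarrow> ('a \<times> 'a) set" where
  "locfrac le = {(r, s). s \<in> Loc le}"

definition loc_eq :: "('a::comm_ring_1 \<times> 'a) \<Rightarrow> 'a \<times> 'a \<Rightarrow> bool" where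
  "loc_eq a b \<longleftrightarrow> fst a * snd b = fst b * snd a"

definition loc_le :: "('a::comm_ring_1 \<Rightarrow> 'a \<Rightarrow> bool) \<Rightarrow> 'a \<times> 'a \<Rightarrow> 'a \<times> 'a \<Rightarrow> bool" where
  "loc_le le a b \<longleftrightarrow> le (fst a * snd b) (fst b * snd a)"

definition loc_add :: "('a::comm_ring_1 \<times> 'a) \<Rightarrow> 'a \<times> 'a \<Rightarrow> 'a \<times> 'a" where
  "loc_add a b = (fst a * snd b + fst b * snd a, snd a * snd b)"

definition loc_mult :: "('a::comm_ring_1 \<times> 'a) \<Rightarrow> 'a \<times> 'a \<Rightarrow> 'a \<times> 'a" where
  "loc_mult a b = (fst a * fst b, snd a * snd b)"

definition bdloc :: "('a::comm_ring_1 \<Rightarrow> 'a \<Rightarrow> bool) \<Rightarrow> ('a \<times> 'a) set" where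
  "bdloc le = {a \<in> locfrac le. \<exists>n::nat.
      loc_le le (- of_nat n, 1) a \<and> loc_le le a (of_nat n, 1)}"

text \<open>A map psi : R_loc^bd -> real is encoded as a function on representatives
  which respects equality of fractions and is 0 off R_loc^bd (so that it is
  determined by its values on R_loc^bd).\<close>
definition Kset :: "('a::comm_ring_1 \<Rightarrow> 'a \<Rightarrow> bool) \<Rightarrow> ('a \<times> 'a \<Rightarrow> real) set" where
  "Kset le = {\<psi>.
     (\<forall>a\<in>bdloc le. \<forall>b\<in>bdloc le. loc_eq a b \<longrightarrow> \<psi> a = \<psi> b) \<and>
     \<psi> (1, 1) = 1 \<and>
     (\<forall>a\<in>bdloc le. \<forall>b\<in>bdloc le. \<psi> (loc_add a b) = \<psi> a + \<psi> b) \<and>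
     (\<forall>a\<in>bdloc le. \<forall>b\<in>bdloc le. \<psi> (loc_mult a b) = \<psi> a * \<psi> b) \<and>
     (\<forall>a\<in>bdloc le. loc_le le (0, 1) a \<longrightarrow> \<psi> a \<ge> 0) \<and>
     (\<forall>a. a \<notin> bdloc le \<longrightarrow> \<psi> a = 0)}"

text \<open>Weak-* topology = topology of pointwise convergence = subspace of the
  product topology.\<close>
definition Ktop :: "('a::comm_ring_1 \<Rightarrow> 'a \<Rightarrow> bool) \<Rightarrow> ('a \<times> 'a \<Rightarrow> real) topology" where
  "Ktop le = subtopology euclidean (Kset le)"

definition Ofin :: "('a::comm_ring_1 \<Rightarrow> 'a \<Rightarrow> bool) \<Rightarrow> 'a \<Rightarrow> ('a \<times> 'a \<Rightarrow> real) set" where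
  "Ofin le s = {\<psi> \<in> Kset le. \<psi> (1, s) > 0}"

text \<open>A representative: a pair (U, f) with U dense open and f continuous on U,
  f extended by 0 outside U (so the partial function is determined by (U,f)).\<close>
definition ae_rep :: "'b topology \<Rightarrow> 'b set \<Rightarrow> ('b \<Rightarrow> real) \<Rightarrow> bool" where
  "ae_rep X U f \<longleftrightarrow> openin X U \<and> X closure_of U = topspace X \<and>
     continuous_map (subtopology X U) euclideanreal f \<and> (\<forall>x. x \<notin> U \<longrightarrow> f x = 0)"

definition ae_eq :: "'b topology \<Rightarrow> 'b set \<times> ('b \<Rightarrow> real) \<Rightarrow> 'b set \<times> ('b \<Rightarrow> real) \<Rightarrow> bool" where
  "ae_eq X p q \<longleftrightarrow> (\<exists>W. openin X W \<and> X closure_of W = topspace X \<and>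
      W \<subseteq> fst p \<inter> fst q \<and> (\<forall>x\<in>W. snd p x = snd q x))"

definition ae_max :: "'b topology \<Rightarrow> 'b set \<times> ('b \<Rightarrow> real) \<Rightarrow> 'b set \<times> ('b \<Rightarrow> real)" where
  "ae_max X p = (THE m. ae_rep X (fst m) (snd m) \<and> ae_eq X m p \<and>
      (\<forall>V g. ae_rep X V g \<and> ae_eq X (V, g) p \<longrightarrow>
         V \<subseteq> fst m \<and> (\<forall>x\<in>V. snd m x = g x)))"

definition r_s :: "'a::comm_ring_1 \<Rightarrow> 'a \<Rightarrow> ('a \<times> 'a \<Rightarrow> real) \<Rightarrow> real" where
  "r_s r s \<psi> = inverse (\<psi> (1, s)) * \<psi> (r, s)"

text \<open>Representative (O_{s<inf}, r_s) of r-hat, for a chosen s in Loc(R) with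
  r/s bounded (the class is independent of the choice).\<close>
definition hat_rep :: "('a::comm_ring_1 \<Rightarrow> 'a \<Rightarrow> bool) \<Rightarrow> 'a \<Rightarrow> ('a \<times> 'a \<Rightarrow> real) set \<times> (('a \<times> 'a \<Rightarrow> real) \<Rightarrow> real)" where
  "hat_rep le r = (let s = (SOME s. s \<in> Loc le \<and> (r, s) \<in> bdloc le) in
      (Ofin le s, \<lambda>\<psi>. if \<psi> \<in> Ofin le s then r_s r s \<psi> else 0))"

definition hat_max :: "('a::comm_ring_1 \<Rightarrow> 'a \<Rightarrow> bool) \<Rightarrow> 'a \<Rightarrow> ('a \<times> 'a \<Rightarrow> real) set \<times> (('a \<times> 'a \<Rightarrow> real) \<Rightarrow> real)" where
  "hat_max le r = ae_max (Ktop le) (hat_rep le r)"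

definition dom_hat :: "('a::comm_ring_1 \<Rightarrow> 'a \<Rightarrow> bool) \<Rightarrow> ('a \<times> 'a \<Rightarrow> real) \<Rightarrow> 'a set" where
  "dom_hat le \<phi> = {r. \<phi> \<in> fst (hat_max le r)}"

definition phi_hat :: "('a::comm_ring_1 \<Rightarrow> 'a \<Rightarrow> bool) \<Rightarrow> ('a \<times> 'a \<Rightarrow> real) \<Rightarrow> 'a \<Rightarrow> real" where
  "phi_hat le \<phi> r = snd (hat_max le r) \<phi>"

end

theory Submission
  imports Defs
begin

text \<open>Every \<open>O\<^sub>s\<^sub><\<^sub>\<infinity>\<close> is dense in \<open>K(R)\<close>, which is what makes \<open>r\<close>-hat an element of
  \<open>C\<^sub>a\<^sub>.\<^sub>e\<^sub>.(K(R))\<close>, by a Positivstellensatz: if every character is nonnegative at \<open>r/u\<close>, then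
  \<open>r \<ge> 0\<close>.  Otherwise some \<open>-(k r + u)/u\<close> lies outside the positive cone; Zorn's lemma gives a maximal
  cone of \<open>R\<^sup>b\<^sup>d\<^sub>l\<^sub>o\<^sub>c\<close> containing it and avoiding \<open>-1\<close>, such a cone is total, and Dedekind cuts
  with respect to it define a character that is negative at \<open>r/u\<close>.

  Given density, on a dense open set the maximal representatives of \<open>a\<close>-hat, \<open>b\<close>-hat,
  \<open>(a + b)\<close>-hat and \<open>(a b)\<close>-hat are all given by the formulas \<open>r\<^sub>s\<close>, for which the ring identities
  and positivity hold pointwise because characters are positive ring morphisms.  A continuous
  function on a dense open set that agrees there with \<open>(a + b)\<close>-hat is a representative of it, so
  by maximality its domain lies in the domain of \<open>(a + b)\<close>-hat; the same argument applied to
  \<open>s\<close>-hat times \<open>\<psi>(r/s)\<close> shows that the domain of \<open>s\<close>-hat lies in that of \<open>r\<close>-hat.\<close>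

lemma Rats_common_denominator:
  assumes "q1 \<in> \<rat>" "q2 \<in> \<rat>"
  obtains M1 M2 N :: int where "N > 0" "q1 = of_int M1 / of_int N" "q2 = of_int M2 / of_int N"
proof -
  obtain a1 b1 where 1: "b1 > 0" "q1 = of_int a1 / of_int b1"
    using assms(1) by (auto elim!: Rats_cases')
  obtain a2 b2 where 2: "b2 > 0" "q2 = of_int a2 / of_int b2"
    using assms(2) by (auto elim!: Rats_cases')
  have "q1 = of_int (a1 * b2) / of_int (b1 * b2)" "q2 = of_int (a2 * b1) / of_int (b1 * b2)"
    using 1 2 by (simp_all add: mult.commute)
  moreover have "b1 * b2 > 0" using 1 2 by simp
  ultimately show ?thesis using that by blast
qed

lemma add_le_if_rationals_below:
  fixes a b c :: real
  assumes "\<And>q1 q2. q1 \<in> \<rat> \<Longrightarrow> q2 \<in> \<rat> \<Longrightarrow> q1 < a \<Longrightarrow> q2 < b \<Longrightarrow> q1 + q2 \<le> c"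
  shows "a + b \<le> c"
proof (rule ccontr)
  assume "\<not> a + b \<le> c"
  then have d: "(a + b - c) / 2 > 0" by simp
  obtain q1 where q1: "q1 \<in> \<rat>" "a - (a + b - c) / 2 < q1" "q1 < a"
    using Rats_dense_in_real[of "a - (a + b - c) / 2" a] d by auto
  obtain q2 where q2: "q2 \<in> \<rat>" "b - (a + b - c) / 2 < q2" "q2 < b"
    using Rats_dense_in_real[of "b - (a + b - c) / 2" b] d by auto
  have "q1 + q2 \<le> c" using assms q1 q2 by blast
  then show False using q1(2,3) q2(2,3) by (smt (verit) field_sum_of_halves)
qed

lemma le_add_if_rationals_above:
  fixes a b c :: real
  assumes "\<And>q1 q2. q1 \<in> \<rat> \<Longrightarrow> q2 \<in> \<rat> \<Longrightarrow> a < q1 \<Longrightarrow> b < q2 \<Longrightarrow> c \<le> q1 + q2"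
  shows "c \<le> a + b"
proof (rule ccontr)
  assume "\<not> c \<le> a + b"
  then have d: "(c - a - b) / 2 > 0" by simp
  obtain q1 where q1: "q1 \<in> \<rat>" "a < q1" "q1 < a + (c - a - b) / 2"
    using Rats_dense_in_real[of a "a + (c - a - b) / 2"] d by auto
  obtain q2 where q2: "q2 \<in> \<rat>" "b < q2" "q2 < b + (c - a - b) / 2"
    using Rats_dense_in_real[of b "b + (c - a - b) / 2"] d by auto
  have "c \<le> q1 + q2" using assms q1 q2 by blast
  then show False using q1(2,3) q2(2,3) by (smt (verit) field_sum_of_halves)
qed

lemma mult_le_if_rationals_below:
  fixes a b c :: real
  assumes "a \<ge> 0" "b \<ge> 0" "c \<ge> 0"
    and h: "\<And>q1 q2. q1 \<in> \<rat> \<Longrightarrow> q2 \<in> \<rat> \<Longrightarrow> 0 \<le> q1 \<Longrightarrow> q1 < a \<Longrightarrow> 0 \<le> q2 \<Longrightarrow> q2 < b \<Longrightarrow> q1 * q2 \<le> c"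
  shows "a * b \<le> c"
proof (rule ccontr)
  assume n: "\<not> a * b \<le> c"
  then have b0: "b > 0" using assms by (metis less_eq_real_def mult_zero_right)
  have "c / b < a" using n b0 by (simp add: divide_less_eq mult.commute)
  then obtain q1 where q1: "q1 \<in> \<rat>" "c / b < q1" "q1 < a" using Rats_dense_in_real by blast
  have q1p: "q1 > 0" using q1 assms b0 by (smt (verit) divide_nonneg_pos)
  have "c / q1 < b" using q1(2) q1p b0 by (simp add: divide_less_eq mult.commute)
  then obtain q2 where q2: "q2 \<in> \<rat>" "c / q1 < q2" "q2 < b" using Rats_dense_in_real by blast
  have q2p: "q2 > 0" using q2 assms(3) q1p by (smt (verit) divide_nonneg_pos)
  have "q1 * q2 \<le> c" using h q1 q2 q1p q2p by simp
  moreover have "c < q1 * q2" using q2(2) q1p by (simp add: divide_less_eq mult.commute)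
  ultimately show False by simp
qed

lemma le_mult_if_rationals_above:
  fixes a b c :: real
  assumes "a \<ge> 0" "b \<ge> 0"
    and h: "\<And>q1 q2. q1 \<in> \<rat> \<Longrightarrow> q2 \<in> \<rat> \<Longrightarrow> a < q1 \<Longrightarrow> b < q2 \<Longrightarrow> c \<le> q1 * q2"
  shows "c \<le> a * b"
proof (rule ccontr)
  assume n: "\<not> c \<le> a * b"
  define t where "t = (if b = 0 then a + 1 else c / b)"
  have "a < t" unfolding t_def using n assms by (auto simp: less_divide_eq mult.commute)
  then obtain q1 where q1: "q1 \<in> \<rat>" "a < q1" "q1 < t" using Rats_dense_in_real by blast
  have q1p: "q1 > 0" using q1 assms by linarith
  have "q1 * b < c"
  proof (cases "b = 0")
    case False
    then have "q1 < c / b" using q1 unfolding t_def by simp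
    then show ?thesis using False assms by (simp add: less_divide_eq)
  qed (use n assms in simp)
  then have "b < c / q1" using q1p by (simp add: less_divide_eq mult.commute)
  then obtain q2 where q2: "q2 \<in> \<rat>" "b < q2" "q2 < c / q1" using Rats_dense_in_real by blast
  have "c \<le> q1 * q2" using h q1 q2 by blast
  moreover have "q1 * q2 < c" using q2(3) q1p by (simp add: less_divide_eq mult.commute)
  ultimately show False by simp
qed

section \<open>Almost everywhere defined continuous functions\<close>

lemma dense_openin_Int:
  assumes "openin X A" "X closure_of A = topspace X" "X closure_of B = topspace X"
  shows "X closure_of (A \<inter> B) = topspace X"
  using assms closure_of_openin_Int_superset openin_subset by metis

lemma continuous_map_eq_on_dense:
  assumes V: "openin X V" and W: "X closure_of W = topspace X"
    and g1: "continuous_map (subtopology X V) euclideanreal g1"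
    and g2: "continuous_map (subtopology X V) euclideanreal g2"
    and agree: "\<And>x. x \<in> V \<inter> W \<Longrightarrow> g1 x = g2 x" and x: "x \<in> V"
  shows "g1 x = g2 x"
proof (rule forall_in_closure_of_eq[OF _ _ g1 g2])
  have "x \<in> V \<inter> X closure_of W" using W x openin_subset[OF V] by auto
  then have "x \<in> X closure_of (V \<inter> W)" by (rule subsetD[OF openin_Int_closure_of_subset[OF V]])
  then show "x \<in> subtopology X V closure_of (V \<inter> W)"
    using x by (simp add: closure_of_subtopology_open V)
qed (use agree in auto)

lemma continuous_map_nonneg_on_dense:
  assumes "openin X V" "X closure_of W = topspace X"
    and g: "continuous_map (subtopology X V) euclideanreal g"
    and "\<And>x. x \<in> V \<inter> W \<Longrightarrow> g x \<ge> 0" and "x \<in> V"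
  shows "g x \<ge> 0"
proof -
  have "g x = \<bar>g x\<bar>"
    using continuous_map_eq_on_dense[OF assms(1,2) g continuous_map_real_abs[OF g]] assms(4,5)
    by simp
  then show ?thesis by linarith
qed

lemma ae_rep_zero_extension:
  assumes "openin X V" "X closure_of V = topspace X" "continuous_map (subtopology X V) euclideanreal G"
  shows "ae_rep X V (\<lambda>x. if x \<in> V then G x else 0)"
  using assms continuous_map_eq[OF assms(3), of "\<lambda>x. if x \<in> V then G x else 0"]
  unfolding ae_rep_def by auto

lemma ae_eq_imp_agree:
  assumes r1: "ae_rep X V1 g1" and r2: "ae_rep X V2 g2"
    and e1: "ae_eq X (V1, g1) p" and e2: "ae_eq X (V2, g2) p" and x: "x \<in> V1 \<inter> V2"
  shows "g1 x = g2 x"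
proof -
  obtain W1 where W1: "openin X W1" "X closure_of W1 = topspace X" "W1 \<subseteq> V1 \<inter> fst p" "\<forall>x\<in>W1. g1 x = snd p x"
    using e1 unfolding ae_eq_def by auto
  obtain W2 where W2: "X closure_of W2 = topspace X" "W2 \<subseteq> V2 \<inter> fst p" "\<forall>x\<in>W2. g2 x = snd p x"
    using e2 unfolding ae_eq_def by auto
  have V: "openin X (V1 \<inter> V2)" using r1 r2 unfolding ae_rep_def by blast
  have c1: "continuous_map (subtopology X (V1 \<inter> V2)) euclideanreal g1"
    using r1 unfolding ae_rep_def by (meson continuous_map_from_subtopology_mono inf_le1)
  have c2: "continuous_map (subtopology X (V1 \<inter> V2)) euclideanreal g2"
    using r2 unfolding ae_rep_def by (meson continuous_map_from_subtopology_mono inf_le2)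
  show ?thesis
    using continuous_map_eq_on_dense[OF V dense_openin_Int[OF W1(1,2) W2(1)] c1 c2 _ x] W1 W2
    by auto
qed

lemma ae_rep_glue:
  assumes reps: "\<And>V g. (V, g) \<in> C \<Longrightarrow> ae_rep X V g"
    and agree: "\<And>V g V' g' x. (V, g) \<in> C \<Longrightarrow> (V', g') \<in> C \<Longrightarrow> x \<in> V \<inter> V' \<Longrightarrow> g x = g' x"
    and U: "(U, f) \<in> C"
  obtains G where "ae_rep X (\<Union>(fst ` C)) G" "\<And>V g x. (V, g) \<in> C \<Longrightarrow> x \<in> V \<Longrightarrow> G x = g x"
proof -
  define Vs where "Vs = \<Union>(fst ` C)"
  define G where "G x = (if x \<in> Vs then snd (SOME p. p \<in> C \<and> x \<in> fst p) x else 0)" for x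
  have sub: "V \<subseteq> Vs" if "(V, g) \<in> C" for V g
    using that unfolding Vs_def by (metis UN_upper fst_conv)
  have G: "G x = g x" if Vg: "(V, g) \<in> C" and x: "x \<in> V" for V g x
  proof -
    let ?p = "SOME p. p \<in> C \<and> x \<in> fst p"
    have "\<exists>p. p \<in> C \<and> x \<in> fst p" using Vg x by (metis fst_conv)
    then have p: "?p \<in> C" "x \<in> fst ?p" by (metis (mono_tags, lifting) someI_ex)+
    then have "snd ?p x = g x" using agree[of "fst ?p" "snd ?p" V g x] Vg x by simp
    moreover have "x \<in> Vs" using sub[OF Vg] x by blast
    ultimately show ?thesis unfolding G_def by simp
  qed
  have open_C: "openin X V" and cont_C: "continuous_map (subtopology X V) euclideanreal g"
    if "(V, g) \<in> C" for V g
    using reps[OF that] unfolding ae_rep_def by blast+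
  have open_Vs: "openin X Vs"
    unfolding Vs_def by (rule openin_Union) (metis imageE open_C prod.collapse)
  have "continuous_map (subtopology X Vs) euclideanreal G"
  proof (rule pasting_lemma[where I = C and T = fst and f = snd])
    fix p assume p: "p \<in> C"
    then have "openin X (fst p)" "fst p \<subseteq> Vs" using open_C sub by (metis prod.collapse)+
    then show "openin (subtopology X Vs) (fst p)"
      by (metis Int_absorb2 openin_subtopology)
    show "continuous_map (subtopology (subtopology X Vs) (fst p)) euclideanreal (snd p)"
      using cont_C[of "fst p" "snd p"] p \<open>fst p \<subseteq> Vs\<close>
      by (simp add: subtopology_subtopology Int_absorb1)
  next
    fix p q x assume "p \<in> C" "q \<in> C" "x \<in> topspace (subtopology X Vs) \<inter> fst p \<inter> fst q"
    then show "snd p x = snd q x" using agree[of "fst p" "snd p" "fst q" "snd q" x] by simp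
  next
    fix x assume "x \<in> topspace (subtopology X Vs)"
    then obtain p where "p \<in> C" "x \<in> fst p" unfolding Vs_def by auto
    then show "\<exists>p. p \<in> C \<and> x \<in> fst p \<and> G x = snd p x" using G[of "fst p" "snd p" x] by force
  qed
  moreover have "X closure_of Vs = topspace X"
    using reps[OF U] sub[OF U] closure_of_mono[of U Vs X] closure_of_subset_topspace[of X Vs]
    unfolding ae_rep_def by blast
  moreover have "G x = 0" if "x \<notin> Vs" for x using that unfolding G_def by simp
  ultimately have "ae_rep X Vs G" using open_Vs unfolding ae_rep_def by blast
  then show ?thesis using that G unfolding Vs_def by blast
qed

lemma ae_max_maximal_rep:
  assumes rep: "ae_rep X U f"
  shows "ae_rep X (fst (ae_max X (U, f))) (snd (ae_max X (U, f)))"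
    and "ae_eq X (ae_max X (U, f)) (U, f)"
    and "\<And>V g. ae_rep X V g \<Longrightarrow> ae_eq X (V, g) (U, f)
           \<Longrightarrow> V \<subseteq> fst (ae_max X (U, f)) \<and> (\<forall>x\<in>V. snd (ae_max X (U, f)) x = g x)"
proof -
  define C where "C = {(V, g). ae_rep X V g \<and> ae_eq X (V, g) (U, f)}"
  define Vs where "Vs = \<Union>(fst ` C)"
  let ?Q = "\<lambda>m. ae_rep X (fst m) (snd m) \<and> ae_eq X m (U, f) \<and>
      (\<forall>V g. ae_rep X V g \<and> ae_eq X (V, g) (U, f) \<longrightarrow> V \<subseteq> fst m \<and> (\<forall>x\<in>V. snd m x = g x))"
  have U: "(U, f) \<in> C" using rep unfolding C_def ae_eq_def ae_rep_def by auto
  have reps: "ae_rep X V g" if "(V, g) \<in> C" for V g using that unfolding C_def by simp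
  have agree: "g x = g' x" if "(V, g) \<in> C" "(V', g') \<in> C" "x \<in> V \<inter> V'" for V g V' g' x
    using that ae_eq_imp_agree[of X V g V' g' "(U, f)" x] unfolding C_def by simp
  obtain G where G0: "ae_rep X (\<Union>(fst ` C)) G" "\<And>V g x. (V, g) \<in> C \<Longrightarrow> x \<in> V \<Longrightarrow> G x = g x"
    by (rule ae_rep_glue[where C = C and X = X and U = U and f = f]) (auto intro: reps agree U)
  note G = G0[folded Vs_def]
  have sub: "V \<subseteq> Vs" if "(V, g) \<in> C" for V g
    using that unfolding Vs_def by (metis UN_upper fst_conv)
  have eqG: "ae_eq X (Vs, G) (U, f)"
    unfolding ae_eq_def using rep sub[OF U] G(2)[OF U] unfolding ae_rep_def by auto
  moreover have "V \<subseteq> Vs \<and> (\<forall>x\<in>V. G x = g x)" if "ae_rep X V g" "ae_eq X (V, g) (U, f)" for V g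
    using that sub[of V g] G(2)[of V g] unfolding C_def by simp
  ultimately have Q: "?Q (Vs, G)" using G(1) by auto
  moreover have "m = (Vs, G)" if m: "?Q m" for m
  proof -
    have mC: "(fst m, snd m) \<in> C" using m unfolding C_def by (simp add: case_prod_beta)
    have "fst m = Vs" using sub[OF mC] m G(1) eqG by blast
    moreover have "snd m x = G x" for x
    proof (cases "x \<in> Vs")
      case True
      then show ?thesis using m G(1) eqG by blast
    next
      case False
      then show ?thesis using m G(1) \<open>fst m = Vs\<close> unfolding ae_rep_def by simp
    qed
    ultimately show ?thesis by (simp add: prod_eq_iff ext)
  qed
  ultimately have "?Q (ae_max X (U, f))" unfolding ae_max_def by (rule theI)
  then show "ae_rep X (fst (ae_max X (U, f))) (snd (ae_max X (U, f)))"
    "ae_eq X (ae_max X (U, f)) (U, f)"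
    "\<And>V g. ae_rep X V g \<Longrightarrow> ae_eq X (V, g) (U, f)
       \<Longrightarrow> V \<subseteq> fst (ae_max X (U, f)) \<and> (\<forall>x\<in>V. snd (ae_max X (U, f)) x = g x)"
    by auto
qed

definition loc_neg :: "'a::comm_ring_1 \<times> 'a \<Rightarrow> 'a \<times> 'a" where
  "loc_neg x = (- fst x, snd x)"

lemma loc_eq_adjoin_add:
  fixes y w w' m1 m2 m1' m2' :: "'a::comm_ring_1 \<times> 'a"
  assumes "loc_eq w (loc_add m1 (loc_mult y m2))" and "loc_eq w' (loc_add m1' (loc_mult y m2'))"
  shows "loc_eq (loc_add w w') (loc_add (loc_add m1 m1') (loc_mult y (loc_add m2 m2')))"
proof -
  obtain a b a' b' a1 b1 a2 b2 a1' b1' a2' b2' c d where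
    e: "w = (a, b)" "w' = (a', b')" "m1 = (a1, b1)" "m2 = (a2, b2)" "m1' = (a1', b1')" "m2' = (a2', b2')"
      "y = (c, d)"
    by (metis surj_pair)
  have h1: "a * (b1 * (d * b2)) = (a1 * (d * b2) + c * a2 * b1) * b"
    and h2: "a' * (b1' * (d * b2')) = (a1' * (d * b2') + c * a2' * b1') * b'"
    using assms unfolding e loc_eq_def loc_add_def loc_mult_def by simp_all
  have "(a * b' + a' * b) * (b1 * b1' * (d * (b2 * b2')))
      = (a * (b1 * (d * b2))) * (b' * b1' * b2') + (a' * (b1' * (d * b2'))) * (b * b1 * b2)"
    by (simp add: algebra_simps)
  also have "\<dots> = ((a1 * (d * b2) + c * a2 * b1) * b) * (b' * b1' * b2')
      + ((a1' * (d * b2') + c * a2' * b1') * b') * (b * b1 * b2)"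
    by (simp only: h1 h2)
  also have "\<dots> = ((a1 * b1' + a1' * b1) * (d * (b2 * b2')) + c * (a2 * b2' + a2' * b2) * (b1 * b1')) * (b * b')"
    by (simp add: algebra_simps)
  finally show ?thesis unfolding e loc_eq_def loc_add_def loc_mult_def by simp
qed

lemma loc_eq_adjoin_mult:
  fixes y w w' m1 m2 m1' m2' :: "'a::comm_ring_1 \<times> 'a"
  assumes "loc_eq w (loc_add m1 (loc_mult y m2))" and "loc_eq w' (loc_add m1' (loc_mult y m2'))"
  shows "loc_eq (loc_mult w w')
    (loc_add (loc_add (loc_mult m1 m1') (loc_mult (loc_mult y y) (loc_mult m2 m2')))
       (loc_mult y (loc_add (loc_mult m1 m2') (loc_mult m2 m1'))))"
proof -
  obtain a b a' b' a1 b1 a2 b2 a1' b1' a2' b2' c d where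
    e: "w = (a, b)" "w' = (a', b')" "m1 = (a1, b1)" "m2 = (a2, b2)" "m1' = (a1', b1')" "m2' = (a2', b2')"
      "y = (c, d)"
    by (metis surj_pair)
  have h1: "a * (b1 * (d * b2)) = (a1 * (d * b2) + c * a2 * b1) * b"
    and h2: "a' * (b1' * (d * b2')) = (a1' * (d * b2') + c * a2' * b1') * b'"
    using assms unfolding e loc_eq_def loc_add_def loc_mult_def by simp_all
  define E where "E = d * (b1 * b2' * (b2 * b1'))"
  have "a * a' * (b1 * b1' * (d * d * (b2 * b2')) * E) = (a * (b1 * (d * b2))) * (a' * (b1' * (d * b2'))) * E"
    unfolding E_def by (simp add: algebra_simps)
  also have "\<dots> = ((a1 * (d * b2) + c * a2 * b1) * b) * ((a1' * (d * b2') + c * a2' * b1') * b') * E"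
    by (simp only: h1 h2)
  also have "\<dots> = ((a1 * a1' * (d * d * (b2 * b2')) + c * c * (a2 * a2') * (b1 * b1')) * E +
     c * (a1 * a2' * (b2 * b1') + a2 * a1' * (b1 * b2')) * (b1 * b1' * (d * d * (b2 * b2')))) * (b * b')"
    unfolding E_def by (simp add: algebra_simps)
  finally show ?thesis unfolding e E_def loc_eq_def loc_add_def loc_mult_def by simp
qed

lemma loc_eq_adjoin_both_signs:
  fixes y m1 m2 m3 m4 :: "'a::comm_ring_1 \<times> 'a"
  assumes "loc_eq (-1, 1) (loc_add m1 (loc_mult y m2))"
    and "loc_eq (-1, 1) (loc_add m3 (loc_mult (loc_neg y) m4))"
  shows "loc_eq (loc_add (loc_add (loc_add m1 m3) (loc_mult m1 m3)) (loc_mult (loc_mult y y) (loc_mult m2 m4)))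
    (-1, 1)"
proof -
  obtain a1 b1 a2 b2 a3 b3 a4 b4 c d where
    e: "m1 = (a1, b1)" "m2 = (a2, b2)" "m3 = (a3, b3)" "m4 = (a4, b4)" "y = (c, d)"
    by (metis surj_pair)
  have h1: "- (b1 * (d * b2)) = a1 * (d * b2) + c * a2 * b1"
    and h2: "- (b3 * (d * b4)) = a3 * (d * b4) + - c * a4 * b3"
    using assms unfolding e loc_neg_def loc_eq_def loc_add_def loc_mult_def by simp_all
  have "(a1 + b1) * (d * b2) = (a1 * (d * b2) + c * a2 * b1) + b1 * (d * b2) - c * a2 * b1"
    by (simp add: algebra_simps)
  also have "\<dots> = - (c * a2 * b1)" unfolding h1[symmetric] by simp
  finally have e1: "(a1 + b1) * (d * b2) = - (c * a2 * b1)" .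
  have e2: "(a3 + b3) * (d * b4) = c * a4 * b3"
    using h2 by (simp add: algebra_simps)
  have "((a1 * b3 + a3 * b1) * (b1 * b3) + a1 * a3 * (b1 * b3)) * (d * d * (b2 * b4))
      + c * c * (a2 * a4) * (b1 * b3 * (b1 * b3)) + b1 * b3 * (b1 * b3) * (d * d * (b2 * b4))
     = b1 * b3 * (((a1 + b1) * (d * b2)) * ((a3 + b3) * (d * b4)) + c * c * (a2 * a4) * (b1 * b3))"
    by (simp add: algebra_simps)
  also have "\<dots> = 0" unfolding e1 e2 by (simp add: algebra_simps)
  finally show ?thesis
    unfolding e loc_eq_def loc_add_def loc_mult_def by (simp add: add_eq_0_iff)
qed

section \<open>Archimedean localizable partially ordered rings\<close>

locale arch_loc_ring =
  fixes le :: "'a::comm_ring_1 \<Rightarrow> 'a \<Rightarrow> bool"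
  assumes po: "po_ring le" and arch: "archimedean_po le" and lcz: "localizable le"
begin

abbreviation pos :: "'a \<Rightarrow> bool" where "pos x \<equiv> le 0 x"

abbreviation Rbd :: "('a \<times> 'a) set" where "Rbd \<equiv> bdloc le"

lemma po_antisym: "le x y \<Longrightarrow> le y x \<Longrightarrow> x = y"
  and po_trans: "le x y \<Longrightarrow> le y z \<Longrightarrow> le x z"
  and po_add_right: "le x y \<Longrightarrow> le (x + t) (y + t)"
  and pos_0: "pos 0"
  and pos_mult: "pos a \<Longrightarrow> pos b \<Longrightarrow> pos (a * b)"
  and pos_square: "pos (a * a)"
  using po unfolding po_ring_def by blast+

lemma le_iff_pos_diff: "le x y \<longleftrightarrow> pos (y - x)"
  using po_add_right[of x y "- x"] po_add_right[of 0 "y - x" x] by auto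

lemma pos_add: "pos a \<Longrightarrow> pos b \<Longrightarrow> pos (a + b)"
  using po_add_right[of 0 b a] po_trans[of 0 a "a + b"] by (simp add: add.commute)

lemma pos_1: "pos 1"
  using pos_square[of 1] by simp

lemma pos_of_nat: "pos (of_nat n)"
  by (induction n) (auto simp: pos_0 intro!: pos_add pos_1)

lemma pos_of_int: "m \<ge> 0 \<Longrightarrow> pos (of_int m)"
  using pos_of_nat[of "nat m"] by simp

lemma pos_add_mult: "pos a \<Longrightarrow> pos b \<Longrightarrow> pos c \<Longrightarrow> pos d \<Longrightarrow> pos (a * b + c * d)"
  by (intro pos_add pos_mult)

lemma pos_antisym: "pos a \<Longrightarrow> pos (- a) \<Longrightarrow> a = 0"
  using po_antisym[of 0 a] le_iff_pos_diff[of a 0] by simp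

lemma archimedean_pos: "(\<And>k::nat. k \<ge> 1 \<Longrightarrow> pos (of_nat k * g + h)) \<Longrightarrow> pos g"
  using arch unfolding archimedean_po_def by blast

lemma Loc_iff: "s \<in> Loc le \<longleftrightarrow> pos (s - 1) \<and> (\<forall>r. pos (r * s) \<longrightarrow> pos r)"
  unfolding Loc_def by simp

lemma Loc_ge_1: "s \<in> Loc le \<Longrightarrow> pos (s - 1)"
  and Loc_cancel_pos: "s \<in> Loc le \<Longrightarrow> pos (r * s) \<Longrightarrow> pos r"
  by (simp_all add: Loc_iff)

lemma Loc_pos: "s \<in> Loc le \<Longrightarrow> pos s"
  using pos_add[of "s - 1" 1] pos_1 by (simp add: Loc_iff)

lemma one_in_Loc: "1 \<in> Loc le"
  by (simp add: Loc_iff pos_0)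

lemma Loc_mult: assumes s: "s \<in> Loc le" and t: "t \<in> Loc le" shows "s * t \<in> Loc le"
proof -
  have "s * t - 1 = (s - 1) * (t - 1) + (s - 1) + (t - 1)" by (simp add: algebra_simps)
  also have "pos \<dots>" using Loc_ge_1[OF s] Loc_ge_1[OF t] by (intro pos_add pos_mult)
  finally have "pos (s * t - 1)" .
  moreover have "pos r" if "pos (r * (s * t))" for r
  proof -
    have "pos (r * s * t)" using that by (simp add: mult.assoc)
    then have "pos (r * s)" by (rule Loc_cancel_pos[OF t])
    then show "pos r" by (rule Loc_cancel_pos[OF s])
  qed
  ultimately show ?thesis unfolding Loc_iff by blast
qed

lemma Loc_cancel: assumes s: "s \<in> Loc le" and "a * s = b * s" shows "a = b"
proof -
  have "(a - b) * s = 0" "(b - a) * s = 0" using assms(2) by (simp_all add: algebra_simps)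
  then have "pos (a - b)" "pos (b - a)"
    using Loc_cancel_pos[OF s, of "a - b"] Loc_cancel_pos[OF s, of "b - a"] pos_0 by simp_all
  then show ?thesis using pos_antisym[of "a - b"] by simp
qed

lemma localizable_bound: obtains t where "t \<in> Loc le" "pos (r + t)" "pos (t - r)"
  using lcz le_iff_pos_diff[of "- _" r] le_iff_pos_diff[of r] unfolding localizable_def by force

text \<open>With \<open>c + t \<ge> 0\<close> and \<open>k = q N + j\<close>, \<open>j < N\<close>, the element \<open>k c + N t = q (N c) + j (c + t) + (N - j) t\<close>
  is nonnegative for every \<open>k\<close>, so the archimedean property applies.\<close>
lemma pos_of_nat_mult_cancel: assumes N: "N \<ge> 1" and c: "pos (of_nat N * c)" shows "pos c"
proof -
  obtain t where t: "t \<in> Loc le" "pos (c + t)" using localizable_bound by blast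
  have "pos (of_nat k * c + of_nat N * t)" for k :: nat
  proof -
    define q j where "q = k div N" and "j = k mod N"
    have k: "k = q * N + j" and jN: "j < N" using N by (simp_all add: q_def j_def)
    then have "of_nat k * c + of_nat N * t = of_nat q * (of_nat N * c) + of_nat j * (c + t) + of_nat (N - j) * t"
      by (simp add: of_nat_diff algebra_simps)
    also have "pos \<dots>"
      by (intro pos_add pos_mult[OF pos_of_nat] c t(2) Loc_pos[OF t(1)])
    finally show ?thesis .
  qed
  then show ?thesis by (rule archimedean_pos)
qed

lemma pos_double_cancel: "pos (2 * c) \<Longrightarrow> pos c"
  using pos_of_nat_mult_cancel[of 2 c] by simp

lemma bdloc_iff:
  "(r, s) \<in> Rbd \<longleftrightarrow> s \<in> Loc le \<and> (\<exists>n::nat. pos (r + of_nat n * s) \<and> pos (of_nat n * s - r))"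
  using le_iff_pos_diff[of "- of_nat _ * s" "r * 1"] le_iff_pos_diff[of "r * 1" "of_nat _ * s"]
  unfolding bdloc_def locfrac_def loc_le_def by simp

lemma bdlocI: "s \<in> Loc le \<Longrightarrow> pos (r + of_nat n * s) \<Longrightarrow> pos (of_nat n * s - r) \<Longrightarrow> (r, s) \<in> Rbd"
  using bdloc_iff by blast

lemma bdlocE:
  assumes "(r, s) \<in> Rbd"
  obtains n :: nat where "s \<in> Loc le" "pos (r + of_nat n * s)" "pos (of_nat n * s - r)"
  using assms bdloc_iff by blast

lemma bdloc_Loc: "(r, s) \<in> Rbd \<Longrightarrow> s \<in> Loc le"
  by (auto elim: bdlocE)

lemma bdloc_add:
  assumes "(r, s) \<in> Rbd" "(r', s') \<in> Rbd" shows "(r * s' + r' * s, s * s') \<in> Rbd"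
proof -
  obtain n where n: "s \<in> Loc le" "pos (r + of_nat n * s)" "pos (of_nat n * s - r)"
    using assms(1) by (rule bdlocE)
  obtain n' where n': "s' \<in> Loc le" "pos (r' + of_nat n' * s')" "pos (of_nat n' * s' - r')"
    using assms(2) by (rule bdlocE)
  have "pos ((r + of_nat n * s) * s' + (r' + of_nat n' * s') * s)"
    "pos ((of_nat n * s - r) * s' + (of_nat n' * s' - r') * s)"
    using n n' Loc_pos by (auto intro!: pos_add_mult)
  then show ?thesis
    using Loc_mult[OF n(1) n'(1)]
    by (intro bdlocI[where n = "n + n'"]) (simp_all add: algebra_simps)
qed

lemma bdloc_mult:
  assumes "(r, s) \<in> Rbd" "(r', s') \<in> Rbd" shows "(r * r', s * s') \<in> Rbd"
proof -
  obtain n where n: "s \<in> Loc le" "pos (r + of_nat n * s)" "pos (of_nat n * s - r)"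
    using assms(1) by (rule bdlocE)
  obtain n' where n': "s' \<in> Loc le" "pos (r' + of_nat n' * s')" "pos (of_nat n' * s' - r')"
    using assms(2) by (rule bdlocE)
  have "pos ((r + of_nat n * s) * (r' + of_nat n' * s') + (of_nat n * s - r) * (of_nat n' * s' - r'))"
    "pos ((r + of_nat n * s) * (of_nat n' * s' - r') + (of_nat n * s - r) * (r' + of_nat n' * s'))"
    using n n' by (auto intro!: pos_add_mult)
  then have "pos (2 * (r * r' + of_nat (n * n') * (s * s')))" "pos (2 * (of_nat (n * n') * (s * s') - r * r'))"
    by (simp_all add: algebra_simps)
  then show ?thesis
    using Loc_mult[OF n(1) n'(1)] pos_double_cancel by (intro bdlocI[where n = "n * n'"]) auto
qed

lemma bdloc_loc_add: "x \<in> Rbd \<Longrightarrow> y \<in> Rbd \<Longrightarrow> loc_add x y \<in> Rbd"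
  using bdloc_add by (cases x, cases y) (simp add: loc_add_def)

lemma bdloc_loc_mult: "x \<in> Rbd \<Longrightarrow> y \<in> Rbd \<Longrightarrow> loc_mult x y \<in> Rbd"
  using bdloc_mult by (cases x, cases y) (simp add: loc_mult_def)

lemma bdloc_uminus: "(r, s) \<in> Rbd \<Longrightarrow> (- r, s) \<in> Rbd"
  by (erule bdlocE, rule bdlocI) (simp_all add: add.commute)

lemma bdloc_of_int_mult: assumes "s \<in> Loc le" shows "(of_int m * s, s) \<in> Rbd"
proof (rule bdlocI[OF assms, where n = "nat \<bar>m\<bar>"])
  have "of_int m * s + of_nat (nat \<bar>m\<bar>) * s = of_nat (nat (m + \<bar>m\<bar>)) * s"
    "of_nat (nat \<bar>m\<bar>) * s - of_int m * s = of_nat (nat (\<bar>m\<bar> - m)) * s"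
    by (simp_all add: algebra_simps)
  then show "pos (of_int m * s + of_nat (nat \<bar>m\<bar>) * s)" "pos (of_nat (nat \<bar>m\<bar>) * s - of_int m * s)"
    using Loc_pos[OF assms] pos_of_nat pos_mult by metis+
qed

lemma bdloc_of_int: "(of_int m, 1) \<in> Rbd"
  using bdloc_of_int_mult[OF one_in_Loc, of m] by simp

lemma bdloc_inverse: "s \<in> Loc le \<Longrightarrow> (1, s) \<in> Rbd"
  by (intro bdlocI[where n = 1]) (auto simp: add.commute intro: pos_add pos_1 Loc_pos Loc_ge_1)

lemma bdloc_same_den_add:
  assumes "(r, s) \<in> Rbd" "(r', s) \<in> Rbd" shows "(r + r', s) \<in> Rbd"
proof -
  obtain n where n: "s \<in> Loc le" "pos (r + of_nat n * s)" "pos (of_nat n * s - r)"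
    using assms(1) by (rule bdlocE)
  obtain n' where n': "pos (r' + of_nat n' * s)" "pos (of_nat n' * s - r')"
    using assms(2) by (rule bdlocE)
  have "pos ((r + of_nat n * s) + (r' + of_nat n' * s))" "pos ((of_nat n * s - r) + (of_nat n' * s - r'))"
    using n n' pos_add by blast+
  then show ?thesis using n(1) by (intro bdlocI[where n = "n + n'"]) (simp_all add: algebra_simps)
qed

lemma bdloc_affine: assumes x: "(r, s) \<in> Rbd" shows "(of_int n * r - of_int m * s, s) \<in> Rbd"
proof -
  have "(of_int n * r, s) \<in> Rbd" using bdloc_mult[OF bdloc_of_int x] by simp
  moreover have "(of_int (- m) * s, s) \<in> Rbd" using bdloc_of_int_mult[OF bdloc_Loc[OF x]] .
  ultimately show ?thesis using bdloc_same_den_add by fastforce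
qed

lemma bdloc_affine': "(r, s) \<in> Rbd \<Longrightarrow> (of_int m * s - of_int n * r, s) \<in> Rbd"
  using bdloc_affine[of r s "- n" "- m"] by simp

lemma bdloc_scale:
  assumes "(r, s) \<in> Rbd" "t \<in> Loc le" shows "(r * t, s * t) \<in> Rbd"
  using bdloc_mult[OF assms(1) bdloc_of_int_mult[OF assms(2), of 1]] by simp

lemma bdloc_add_same_num:
  assumes a: "(a, sa) \<in> Rbd" and b: "(b, sb) \<in> Rbd" shows "(a + b, sa * sb) \<in> Rbd"
  using bdloc_same_den_add bdloc_mult[OF a bdloc_inverse[OF bdloc_Loc[OF b]]]
    bdloc_mult[OF b bdloc_inverse[OF bdloc_Loc[OF a]]] by (simp add: mult.commute)

lemma loc_eq_sym: "loc_eq x y \<Longrightarrow> loc_eq y x"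
  unfolding loc_eq_def by simp

lemma loc_eq_trans:
  assumes xy: "loc_eq x y" and yz: "loc_eq y z" and y: "snd y \<in> Loc le"
  shows "loc_eq x z"
  unfolding loc_eq_def
proof (rule Loc_cancel[OF y])
  have "fst x * snd z * snd y = (fst x * snd y) * snd z" by (simp add: ac_simps)
  also have "\<dots> = (fst y * snd z) * snd x" using xy unfolding loc_eq_def by (simp add: ac_simps)
  also have "\<dots> = fst z * snd x * snd y" using yz unfolding loc_eq_def by (simp add: ac_simps)
  finally show "fst x * snd z * snd y = fst z * snd x * snd y" .
qed

lemma Kset_loc_eq: "\<psi> \<in> Kset le \<Longrightarrow> a \<in> Rbd \<Longrightarrow> b \<in> Rbd \<Longrightarrow> loc_eq a b \<Longrightarrow> \<psi> a = \<psi> b"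
  and Kset_add: "\<psi> \<in> Kset le \<Longrightarrow> a \<in> Rbd \<Longrightarrow> b \<in> Rbd \<Longrightarrow> \<psi> (loc_add a b) = \<psi> a + \<psi> b"
  and Kset_mult: "\<psi> \<in> Kset le \<Longrightarrow> a \<in> Rbd \<Longrightarrow> b \<in> Rbd \<Longrightarrow> \<psi> (loc_mult a b) = \<psi> a * \<psi> b"
  and Kset_one: "\<psi> \<in> Kset le \<Longrightarrow> \<psi> (1, 1) = 1"
  and Kset_outside: "\<psi> \<in> Kset le \<Longrightarrow> a \<notin> Rbd \<Longrightarrow> \<psi> a = 0"
  unfolding Kset_def by blast+

lemma Kset_nonneg: "\<psi> \<in> Kset le \<Longrightarrow> (r, s) \<in> Rbd \<Longrightarrow> pos r \<Longrightarrow> \<psi> (r, s) \<ge> 0"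
  unfolding Kset_def loc_le_def by auto

lemma Kset_mult_frac:
  "\<psi> \<in> Kset le \<Longrightarrow> (r, s) \<in> Rbd \<Longrightarrow> (r', s') \<in> Rbd \<Longrightarrow> \<psi> (r * r', s * s') = \<psi> (r, s) * \<psi> (r', s')"
  using Kset_mult[of \<psi> "(r, s)" "(r', s')"] by (simp add: loc_mult_def)

lemma Kset_scale:
  assumes "\<psi> \<in> Kset le" "(r, s) \<in> Rbd" "t \<in> Loc le" shows "\<psi> (r * t, s * t) = \<psi> (r, s)"
  using Kset_loc_eq[OF assms(1) bdloc_scale[OF assms(2,3)] assms(2)]
  by (simp add: loc_eq_def algebra_simps)

lemma Kset_same_den_add:
  assumes "\<psi> \<in> Kset le" "(r, s) \<in> Rbd" "(r', s) \<in> Rbd"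
  shows "\<psi> (r + r', s) = \<psi> (r, s) + \<psi> (r', s)"
proof -
  have "loc_add (r, s) (r', s) = ((r + r') * s, s * s)" by (simp add: loc_add_def algebra_simps)
  then show ?thesis
    using Kset_add[OF assms] Kset_scale[OF assms(1) bdloc_same_den_add[OF assms(2,3)] bdloc_Loc[OF assms(2)]]
    by simp
qed

lemma Kset_of_nat: assumes "\<psi> \<in> Kset le" shows "\<psi> (of_nat n, 1) = of_nat n"
proof (induction n)
  case 0
  show ?case using Kset_same_den_add[OF assms, of 0 1 0] bdloc_of_int[of 0] by simp
next
  case (Suc n)
  then show ?case
    using Kset_same_den_add[OF assms, of "of_nat n" 1 1] bdloc_of_int[of "int n"] bdloc_of_int[of 1] Kset_one[OF assms]
    by (simp add: add.commute)
qed

lemma Kset_of_int: assumes "\<psi> \<in> Kset le" shows "\<psi> (of_int m, 1) = of_int m"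
proof (cases "m \<ge> 0")
  case True
  then show ?thesis using Kset_of_nat[OF assms, of "nat m"] by simp
next
  case False
  have "\<psi> (of_int m + of_int (- m), 1) = \<psi> (of_int m, 1) + \<psi> (of_int (- m), 1)"
    using Kset_same_den_add[OF assms] bdloc_of_int by blast
  then show ?thesis
    using Kset_of_nat[OF assms, of "nat (- m)"] Kset_of_nat[OF assms, of 0] False by simp
qed

lemma Kset_of_int_mult: "\<psi> \<in> Kset le \<Longrightarrow> s \<in> Loc le \<Longrightarrow> \<psi> (of_int m * s, s) = of_int m"
  using Kset_scale[OF _ bdloc_of_int] Kset_of_int by (metis mult_1)

lemma Kset_affine:
  assumes \<psi>: "\<psi> \<in> Kset le" and x: "(r, s) \<in> Rbd"
  shows "\<psi> (of_int n * r - of_int m * s, s) = of_int n * \<psi> (r, s) - of_int m"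
proof -
  have s: "s \<in> Loc le" using bdloc_Loc[OF x] .
  have "(of_int n * r, s) \<in> Rbd" "(- (of_int m * s), s) \<in> Rbd"
    using bdloc_affine[OF x, of n 0] bdloc_of_int_mult[OF s, of "- m"] by simp_all
  then have "\<psi> (of_int n * r + - (of_int m * s), s) = \<psi> (of_int n * r, s) + \<psi> (- (of_int m * s), s)"
    by (rule Kset_same_den_add[OF \<psi>])
  moreover have "\<psi> (of_int n * r, s) = of_int n * \<psi> (r, s)"
    using Kset_mult_frac[OF \<psi> bdloc_of_int x] Kset_of_int[OF \<psi>] by simp
  ultimately show ?thesis using Kset_of_int_mult[OF \<psi> s, of "- m"] by simp
qed

lemma Kset_inverse_nonneg: "\<psi> \<in> Kset le \<Longrightarrow> s \<in> Loc le \<Longrightarrow> \<psi> (1, s) \<ge> 0"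
  using Kset_nonneg bdloc_inverse pos_1 by blast

subsection \<open>Cones in the bounded localization\<close>

definition loc_pos :: "('a \<times> 'a) set" where
  "loc_pos = {x \<in> Rbd. pos (fst x)}"

definition loc_cone :: "('a \<times> 'a) set \<Rightarrow> bool" where
  "loc_cone Q \<longleftrightarrow> Q \<subseteq> Rbd \<and> loc_pos \<subseteq> Q
     \<and> (\<forall>x\<in>Q. \<forall>y\<in>Q. loc_add x y \<in> Q \<and> loc_mult x y \<in> Q)
     \<and> (\<forall>x\<in>Q. \<forall>y\<in>Rbd. loc_eq x y \<longrightarrow> y \<in> Q)"

definition cone_adjoin :: "('a \<times> 'a) set \<Rightarrow> 'a \<times> 'a \<Rightarrow> ('a \<times> 'a) set" where
  "cone_adjoin Q y = {w \<in> Rbd. \<exists>m1\<in>Q. \<exists>m2\<in>Q. loc_eq w (loc_add m1 (loc_mult y m2))}"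

lemma loc_coneD:
  assumes "loc_cone Q"
  shows "Q \<subseteq> Rbd" "loc_pos \<subseteq> Q" "x \<in> Q \<Longrightarrow> y \<in> Q \<Longrightarrow> loc_add x y \<in> Q"
    "x \<in> Q \<Longrightarrow> y \<in> Q \<Longrightarrow> loc_mult x y \<in> Q" "x \<in> Q \<Longrightarrow> y \<in> Rbd \<Longrightarrow> loc_eq x y \<Longrightarrow> y \<in> Q"
  using assms unfolding loc_cone_def by blast+

lemma loc_posI: "(r, s) \<in> Rbd \<Longrightarrow> pos r \<Longrightarrow> (r, s) \<in> loc_pos"
  unfolding loc_pos_def by simp

lemma loc_mult_self_in_loc_pos: "y \<in> Rbd \<Longrightarrow> loc_mult y y \<in> loc_pos"
  unfolding loc_pos_def by (cases y) (simp add: bdloc_mult loc_mult_def pos_square)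

lemma minus_one_bdloc: "(-1, 1) \<in> Rbd"
  using bdloc_of_int[of "-1"] by simp

lemma bdloc_loc_neg: "x \<in> Rbd \<Longrightarrow> loc_neg x \<in> Rbd"
  unfolding loc_neg_def using bdloc_uminus by (cases x) auto

lemma loc_cone_loc_pos: "loc_cone loc_pos"
proof -
  have "loc_add x y \<in> loc_pos" "loc_mult x y \<in> loc_pos" if xy: "x \<in> loc_pos" "y \<in> loc_pos" for x y
  proof -
    obtain r s r' s' where e: "x = (r, s)" "y = (r', s')" by (metis surj_pair)
    have b: "(r, s) \<in> Rbd" "(r', s') \<in> Rbd" "pos r" "pos r'"
      using xy unfolding e loc_pos_def by auto
    then have "pos (r * s' + r' * s)" using Loc_pos bdloc_Loc by (intro pos_add_mult) auto
    then show "loc_add x y \<in> loc_pos" "loc_mult x y \<in> loc_pos"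
      using b bdloc_add bdloc_mult pos_mult
      unfolding e loc_pos_def loc_add_def loc_mult_def by simp_all
  qed
  moreover have "y \<in> loc_pos" if xy: "x \<in> loc_pos" "y \<in> Rbd" "loc_eq x y" for x y
  proof -
    obtain r s r' s' where e: "x = (r, s)" "y = (r', s')" by (metis surj_pair)
    have b: "(r, s) \<in> Rbd" "(r', s') \<in> Rbd" "pos r" "r * s' = r' * s"
      using xy unfolding e loc_pos_def loc_eq_def by auto
    then have "pos (r' * s)" using pos_mult Loc_pos bdloc_Loc by metis
    then show ?thesis using b Loc_cancel_pos bdloc_Loc unfolding e loc_pos_def by auto
  qed
  ultimately show ?thesis unfolding loc_cone_def loc_pos_def by blast
qed

lemma loc_of_int_in_cone: "loc_cone Q \<Longrightarrow> m \<ge> 0 \<Longrightarrow> (of_int m, 1) \<in> Q"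
  using loc_coneD(2) loc_posI[OF bdloc_of_int pos_of_int] by blast

lemma loc_zero_in_cone: "loc_cone Q \<Longrightarrow> (0, 1) \<in> Q"
  and loc_one_in_cone: "loc_cone Q \<Longrightarrow> (1, 1) \<in> Q"
  using loc_of_int_in_cone[of Q 0] loc_of_int_in_cone[of Q 1] by simp_all

lemma cone_adjoin_superset: assumes "loc_cone Q" shows "Q \<subseteq> cone_adjoin Q y"
proof
  fix w assume "w \<in> Q"
  moreover have "loc_eq w (loc_add w (loc_mult y (0, 1)))"
    unfolding loc_eq_def loc_add_def loc_mult_def by simp
  ultimately show "w \<in> cone_adjoin Q y"
    using loc_coneD(1)[OF assms] loc_zero_in_cone[OF assms] unfolding cone_adjoin_def by blast
qed

lemma mem_cone_adjoin: assumes "loc_cone Q" "y \<in> Rbd" shows "y \<in> cone_adjoin Q y"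
proof -
  have "loc_eq y (loc_add (0, 1) (loc_mult y (1, 1)))"
    unfolding loc_eq_def loc_add_def loc_mult_def by simp
  then show ?thesis
    using assms loc_zero_in_cone loc_one_in_cone unfolding cone_adjoin_def by blast
qed

lemma loc_cone_cone_adjoin:
  assumes Q: "loc_cone Q" and y: "y \<in> Rbd"
  shows "loc_cone (cone_adjoin Q y)"
proof -
  note Q_add = loc_coneD(3)[OF Q] and Q_mult = loc_coneD(4)[OF Q]
  have yy: "loc_mult y y \<in> Q" using loc_coneD(2)[OF Q] loc_mult_self_in_loc_pos[OF y] by blast
  have closed: "loc_add w w' \<in> cone_adjoin Q y \<and> loc_mult w w' \<in> cone_adjoin Q y"
    if w: "w \<in> cone_adjoin Q y" and w': "w' \<in> cone_adjoin Q y" for w w'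
  proof -
    obtain m1 m2 where m: "m1 \<in> Q" "m2 \<in> Q" "loc_eq w (loc_add m1 (loc_mult y m2))" "w \<in> Rbd"
      using w unfolding cone_adjoin_def by blast
    obtain m1' m2' where m': "m1' \<in> Q" "m2' \<in> Q" "loc_eq w' (loc_add m1' (loc_mult y m2'))" "w' \<in> Rbd"
      using w' unfolding cone_adjoin_def by blast
    have "loc_add m1 m1' \<in> Q" "loc_add m2 m2' \<in> Q"
      "loc_add (loc_mult m1 m1') (loc_mult (loc_mult y y) (loc_mult m2 m2')) \<in> Q"
      "loc_add (loc_mult m1 m2') (loc_mult m2 m1') \<in> Q"
      using m m' yy Q_add Q_mult by simp_all
    moreover have "loc_add w w' \<in> Rbd" "loc_mult w w' \<in> Rbd"
      using m(4) m'(4) bdloc_loc_add bdloc_loc_mult by simp_all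
    ultimately show ?thesis
      using loc_eq_adjoin_add[OF m(3) m'(3)] loc_eq_adjoin_mult[OF m(3) m'(3)]
      unfolding cone_adjoin_def by blast
  qed
  have loc_eq_closed: "v \<in> cone_adjoin Q y"
    if w: "w \<in> cone_adjoin Q y" and v: "v \<in> Rbd" "loc_eq w v" for w v
  proof -
    obtain m1 m2 where m: "m1 \<in> Q" "m2 \<in> Q" "loc_eq w (loc_add m1 (loc_mult y m2))" "w \<in> Rbd"
      using w unfolding cone_adjoin_def by blast
    have "snd w \<in> Loc le" using bdloc_Loc[of "fst w" "snd w"] m(4) by simp
    then have "loc_eq v (loc_add m1 (loc_mult y m2))"
      using loc_eq_trans[OF loc_eq_sym[OF v(2)] m(3)] by blast
    then show ?thesis using m v unfolding cone_adjoin_def by blast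
  qed
  have "cone_adjoin Q y \<subseteq> Rbd" unfolding cone_adjoin_def by blast
  moreover have "loc_pos \<subseteq> cone_adjoin Q y"
    using cone_adjoin_superset[OF Q] loc_coneD(2)[OF Q] by blast
  ultimately show ?thesis using closed loc_eq_closed unfolding loc_cone_def by blast
qed

lemma minus_one_in_cone_adjoin_both_signs:
  assumes Q: "loc_cone Q" and y: "y \<in> Rbd"
    and "(-1, 1) \<in> cone_adjoin Q y" and "(-1, 1) \<in> cone_adjoin Q (loc_neg y)"
  shows "(-1, 1) \<in> Q"
proof -
  obtain m1 m2 where m: "m1 \<in> Q" "m2 \<in> Q" "loc_eq (-1, 1) (loc_add m1 (loc_mult y m2))"
    using assms(3) unfolding cone_adjoin_def by blast
  obtain m3 m4 where m': "m3 \<in> Q" "m4 \<in> Q" "loc_eq (-1, 1) (loc_add m3 (loc_mult (loc_neg y) m4))"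
    using assms(4) unfolding cone_adjoin_def by blast
  have "loc_mult y y \<in> Q" using loc_coneD(2)[OF Q] loc_mult_self_in_loc_pos[OF y] by blast
  then have "loc_add (loc_add (loc_add m1 m3) (loc_mult m1 m3)) (loc_mult (loc_mult y y) (loc_mult m2 m4)) \<in> Q"
    using m m' loc_coneD(3,4)[OF Q] by simp
  then show ?thesis
    using loc_coneD(5)[OF Q _ minus_one_bdloc loc_eq_adjoin_both_signs[OF m(3) m'(3)]] by blast
qed

lemma loc_cone_Union_chain:
  assumes "C \<noteq> {}" "\<And>Q. Q \<in> C \<Longrightarrow> loc_cone Q" "\<And>Q Q'. Q \<in> C \<Longrightarrow> Q' \<in> C \<Longrightarrow> Q \<subseteq> Q' \<or> Q' \<subseteq> Q"
  shows "loc_cone (\<Union>C)"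
proof -
  have "loc_add x y \<in> \<Union>C \<and> loc_mult x y \<in> \<Union>C" if xy: "x \<in> \<Union>C" "y \<in> \<Union>C" for x y
  proof -
    obtain Q Q' where "Q \<in> C" "Q' \<in> C" "x \<in> Q" "y \<in> Q'" using xy by blast
    then obtain Q'' where "Q'' \<in> C" "x \<in> Q''" "y \<in> Q''" using assms(3) by blast
    then show ?thesis using loc_coneD(3,4)[OF assms(2)] by blast
  qed
  moreover have "\<Union>C \<subseteq> Rbd" using assms(2) loc_coneD(1) by blast
  moreover have "loc_pos \<subseteq> \<Union>C" using assms(1,2) loc_coneD(2) by blast
  moreover have "y \<in> \<Union>C" if "x \<in> \<Union>C" "y \<in> Rbd" "loc_eq x y" for x y
    using that assms(2) loc_coneD(5) by blast
  ultimately show ?thesis unfolding loc_cone_def by blast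
qed

lemma descent_step:
  assumes aq: "a * q * v = (p + v) * u * w"
    and pos: "pos p" "pos q" "pos u" "pos v" "pos w" and Nw: "pos (of_nat N * w - q)"
    and N: "N \<ge> 1" and wv: "w * v \<in> Loc le"
    and j: "pos (of_nat N * a + of_nat (Suc j) * u)"
  shows "pos (of_nat N * a + of_nat j * u)"
proof -
  define J :: 'a where "J = of_nat j"
  have J1: "pos (J + 1)" and j': "pos (of_nat N * a + (J + 1) * u)"
    using pos_of_nat[of "Suc j"] j unfolding J_def by (simp_all add: add.commute)
  have "(of_nat N * a + (J + 1) * u) * (of_nat N * w - q) * v + of_nat N * u * w * p + (J + 1) * u * q * v
      = of_nat N * of_nat N * a * w * v - of_nat N * (a * q * v) + of_nat N * (J + 1) * u * w * v
        + of_nat N * u * w * p"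
    by (simp add: algebra_simps)
  also have "\<dots> = (of_nat N * (of_nat N * a + J * u)) * (w * v)"
    unfolding aq by (simp add: algebra_simps)
  finally have eq: "(of_nat N * a + (J + 1) * u) * (of_nat N * w - q) * v + of_nat N * u * w * p
      + (J + 1) * u * q * v = (of_nat N * (of_nat N * a + J * u)) * (w * v)" .
  have "pos ((of_nat N * a + (J + 1) * u) * (of_nat N * w - q) * v + of_nat N * u * w * p
      + (J + 1) * u * q * v)"
    by (intro j' J1 Nw pos pos_of_nat pos_add pos_mult)
  then have "pos ((of_nat N * (of_nat N * a + J * u)) * (w * v))" unfolding eq .
  then show ?thesis
    using Loc_cancel_pos[OF wv] pos_of_nat_mult_cancel[OF N] unfolding J_def by blast
qed

text \<open>If \<open>-1 = p/v - (a/u) (q/w)\<close> with \<open>p, q \<ge> 0\<close>, then \<open>N a + j u \<ge> 0\<close> descends from \<open>j = N K\<close>, where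
  it holds because \<open>-a \<le> K u\<close>, down to \<open>j = 0\<close>; so \<open>a \<ge> 0\<close>.\<close>
lemma minus_one_notin_cone_adjoin_neg:
  assumes au: "(- a, u) \<in> Rbd" and na: "\<not> pos a"
  shows "(-1, 1) \<notin> cone_adjoin loc_pos (- a, u)"
proof
  assume "(-1, 1) \<in> cone_adjoin loc_pos (- a, u)"
  then obtain t1 t2 where t: "t1 \<in> loc_pos" "t2 \<in> loc_pos"
    and eq: "loc_eq (-1, 1) (loc_add t1 (loc_mult (- a, u) t2))"
    unfolding cone_adjoin_def by blast
  obtain p v q w where pv: "t1 = (p, v)" and qw: "t2 = (q, w)" by (metis surj_pair)
  have bd: "(p, v) \<in> Rbd" "(q, w) \<in> Rbd" and pq: "pos p" "pos q"
    using t unfolding pv qw loc_pos_def by auto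
  have hh: "- (v * (u * w)) = p * (u * w) + - a * q * v"
    using eq unfolding pv qw loc_eq_def loc_add_def loc_mult_def by simp
  have "a * q * v = p * (u * w) - (p * (u * w) + - a * q * v)" by (simp add: algebra_simps)
  also have "\<dots> = (p + v) * u * w" unfolding hh[symmetric] by (simp add: algebra_simps)
  finally have aq: "a * q * v = (p + v) * u * w" .
  have u: "u \<in> Loc le" and v: "v \<in> Loc le" and w: "w \<in> Loc le" using au bd by (auto elim: bdlocE)
  obtain K where K: "pos (of_nat K * u - - a)" using au by (auto elim: bdlocE)
  obtain N0 where "pos (of_nat N0 * w - q)" using bd(2) by (auto elim: bdlocE)
  then have Nw: "pos (of_nat (Suc N0) * w - q)"
    using pos_add[of "of_nat N0 * w - q" w] Loc_pos[OF w] by (simp add: algebra_simps)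
  have step: "pos (of_nat (Suc N0) * a + of_nat j * u)"
    if "pos (of_nat (Suc N0) * a + of_nat (Suc j) * u)" for j
    using descent_step[OF aq pq Loc_pos[OF u] Loc_pos[OF v] Loc_pos[OF w] Nw _ Loc_mult[OF w v] that]
    by simp
  have down: "pos (of_nat (Suc N0) * a + of_nat j * u)"
    if "pos (of_nat (Suc N0) * a + of_nat (j + m) * u)" for j m
    using that
  proof (induction m)
    case (Suc m)
    then have "pos (of_nat (Suc N0) * a + of_nat (j + m) * u)" using step[of "j + m"] by simp
    then show ?case by (rule Suc.IH)
  qed simp
  have "pos (of_nat (Suc N0) * a + of_nat (0 + Suc N0 * K) * u)"
    using pos_mult[OF pos_of_nat K, of "Suc N0"] by (simp add: algebra_simps)
  then have "pos (of_nat (Suc N0) * a)" using down[of 0 "Suc N0 * K"] by simp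
  then show False using pos_of_nat_mult_cancel[of "Suc N0" a] na by simp
qed

definition total_cone :: "('a \<times> 'a) set \<Rightarrow> bool" where
  "total_cone M \<longleftrightarrow> loc_cone M \<and> (-1, 1) \<notin> M \<and> (\<forall>y\<in>Rbd. y \<in> M \<or> loc_neg y \<in> M)"

lemma maximal_proper_cone_total:
  assumes M: "loc_cone M" "(-1, 1) \<notin> M"
    and max: "\<And>Q. loc_cone Q \<Longrightarrow> (-1, 1) \<notin> Q \<Longrightarrow> M \<subseteq> Q \<Longrightarrow> Q = M"
  shows "total_cone M"
proof -
  have "(-1, 1) \<in> cone_adjoin M z" if z: "z \<in> Rbd" "z \<notin> M" for z
    using max[OF loc_cone_cone_adjoin[OF M(1) z(1)] _ cone_adjoin_superset[OF M(1)]]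
      mem_cone_adjoin[OF M(1) z(1)] z(2) by blast
  then have "y \<in> M \<or> loc_neg y \<in> M" if "y \<in> Rbd" for y
    using minus_one_in_cone_adjoin_both_signs[OF M(1) that] bdloc_loc_neg[OF that] M(2) that
    by blast
  then show ?thesis using M unfolding total_cone_def by blast
qed

lemma total_cone_containing:
  assumes au: "(- a, u) \<in> Rbd" and na: "\<not> pos a"
  obtains M where "total_cone M" "(- a, u) \<in> M"
proof -
  define F where "F = {Q. loc_cone Q \<and> (-1, 1) \<notin> Q \<and> (- a, u) \<in> Q}"
  have "\<exists>M\<in>F. \<forall>Q\<in>F. M \<subseteq> Q \<longrightarrow> Q = M"
  proof (rule subset_Zorn_nonempty)
    show "F \<noteq> {}"
      using loc_cone_cone_adjoin[OF loc_cone_loc_pos au] minus_one_notin_cone_adjoin_neg[OF au na]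
        mem_cone_adjoin[OF loc_cone_loc_pos au] unfolding F_def by blast
  next
    fix C assume C: "C \<noteq> {}" "subset.chain F C"
    then have "loc_cone (\<Union>C)"
      by (intro loc_cone_Union_chain) (auto simp: F_def subset.chain_def)
    then show "\<Union>C \<in> F" using C unfolding F_def subset.chain_def by blast
  qed
  then obtain M where M: "M \<in> F" and max: "\<And>Q. Q \<in> F \<Longrightarrow> M \<subseteq> Q \<Longrightarrow> Q = M" by blast
  have "total_cone M"
    using M max by (intro maximal_proper_cone_total) (auto simp: F_def)
  then show ?thesis using M that unfolding F_def by blast
qed

context
  fixes M assumes M: "total_cone M"
begin

lemma total_coneD:
  "loc_cone M" "(-1, 1) \<notin> M" "y \<in> Rbd \<Longrightarrow> y \<in> M \<or> loc_neg y \<in> M"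
  using M unfolding total_cone_def by blast+

lemmas M_sub = loc_coneD(1)[OF total_coneD(1)]
  and M_pos = loc_coneD(2)[OF total_coneD(1)]
  and M_add = loc_coneD(3)[OF total_coneD(1)]
  and M_mult = loc_coneD(4)[OF total_coneD(1)]
  and M_loc_eq = loc_coneD(5)[OF total_coneD(1)]
  and M_of_int = loc_of_int_in_cone[OF total_coneD(1)]

lemma of_int_mult_in_total_cone: assumes "(of_int c * s, s) \<in> M" shows "c \<ge> 0"
proof (rule ccontr)
  assume "\<not> c \<ge> 0"
  have "(of_int c, 1) \<in> M" using M_loc_eq[OF assms bdloc_of_int] by (simp add: loc_eq_def)
  then have "loc_add (of_int c, 1) (of_int (- 1 - c), 1) \<in> M"
    using M_of_int[of "- 1 - c"] \<open>\<not> c \<ge> 0\<close> M_add by simp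
  then show False using total_coneD(2) by (simp add: loc_add_def)
qed

lemma total_cone_cut_le:
  assumes n: "n > 0" "n' > 0" and x: "(r, s) \<in> Rbd"
    and "(of_int n * r - of_int m * s, s) \<in> M" and "(of_int m' * s - of_int n' * r, s) \<in> M"
  shows "real_of_int m / real_of_int n \<le> real_of_int m' / real_of_int n'"
proof -
  have s: "s \<in> Loc le" using bdloc_Loc[OF x] .
  have "loc_add (loc_mult (of_int n', 1) (of_int n * r - of_int m * s, s))
      (loc_mult (of_int n, 1) (of_int m' * s - of_int n' * r, s)) \<in> M"
    using M_of_int n assms(4,5) by (intro M_add M_mult) auto
  moreover have "loc_eq (loc_add (loc_mult (of_int n', 1) (of_int n * r - of_int m * s, s))
      (loc_mult (of_int n, 1) (of_int m' * s - of_int n' * r, s))) (of_int (n * m' - n' * m) * s, s)"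
    unfolding loc_eq_def loc_add_def loc_mult_def by (simp add: algebra_simps)
  ultimately have "(of_int (n * m' - n' * m) * s, s) \<in> M"
    using M_loc_eq bdloc_of_int_mult[OF s] by blast
  then have "n * m' - n' * m \<ge> 0" by (rule of_int_mult_in_total_cone)
  then show ?thesis using n
    by (simp add: divide_simps) (simp add: mult.commute of_int_mult[symmetric] del: of_int_mult)
qed

text \<open>The rationals \<open>m/n\<close> lying below \<open>r/s\<close> in the total order defined by \<open>M\<close>.\<close>
definition cone_lower_cut :: "'a \<times> 'a \<Rightarrow> real set" where
  "cone_lower_cut x = {real_of_int m / real_of_int n | m n.
     n > 0 \<and> (of_int n * fst x - of_int m * snd x, snd x) \<in> M}"

definition cone_char :: "'a \<times> 'a \<Rightarrow> real" where
  "cone_char x = (if x \<in> Rbd then Sup (cone_lower_cut x) else 0)"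

lemma cone_lower_cut_nonempty: assumes "(r, s) \<in> Rbd" shows "cone_lower_cut (r, s) \<noteq> {}"
proof -
  obtain K where "pos (r + of_nat K * s)" using assms by (auto elim: bdlocE)
  moreover have "(r + of_nat K * s, s) \<in> Rbd" using bdloc_affine[OF assms, of 1 "- int K"] by simp
  ultimately have "(of_int 1 * r - of_int (- int K) * s, s) \<in> M" using M_pos loc_posI by auto
  then have "real_of_int (- int K) / real_of_int 1 \<in> cone_lower_cut (r, s)"
    unfolding cone_lower_cut_def by fastforce
  then show ?thesis by blast
qed

lemma cone_lower_cut_bdd_above: assumes x: "(r, s) \<in> Rbd" shows "bdd_above (cone_lower_cut (r, s))"
proof -
  obtain K where "pos (of_nat K * s - r)" using x by (auto elim: bdlocE)
  moreover have "(of_nat K * s - r, s) \<in> Rbd" using bdloc_affine'[OF x, of "int K" 1] by simp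
  ultimately have upper: "(of_int (int K) * s - of_int 1 * r, s) \<in> M" using M_pos loc_posI by auto
  have "real_of_int m / real_of_int n \<le> real_of_int (int K) / real_of_int 1"
    if "n > 0" "(of_int n * r - of_int m * s, s) \<in> M" for m n
    using total_cone_cut_le[OF that(1) _ x that(2) upper] by simp
  then show ?thesis unfolding bdd_above_def cone_lower_cut_def by auto
qed

lemma cone_char_ge:
  "(r, s) \<in> Rbd \<Longrightarrow> n > 0 \<Longrightarrow> (of_int n * r - of_int m * s, s) \<in> M
    \<Longrightarrow> real_of_int m / real_of_int n \<le> cone_char (r, s)"
  unfolding cone_char_def using cone_lower_cut_bdd_above
  by (auto intro!: cSup_upper simp: cone_lower_cut_def)

lemma cone_char_le:
  assumes "(r, s) \<in> Rbd" "n > 0" "(of_int m * s - of_int n * r, s) \<in> M"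
  shows "cone_char (r, s) \<le> real_of_int m / real_of_int n"
  unfolding cone_char_def using assms cone_lower_cut_nonempty[OF assms(1)]
  by (auto intro!: cSup_least simp: cone_lower_cut_def intro: total_cone_cut_le[OF _ _ assms(1) _ assms(3)])

lemma cone_char_less_imp:
  assumes "(r, s) \<in> Rbd" "n > 0" "cone_char (r, s) < real_of_int m / real_of_int n"
  shows "(of_int m * s - of_int n * r, s) \<in> M"
proof (rule ccontr)
  assume "(of_int m * s - of_int n * r, s) \<notin> M"
  then have "(of_int n * r - of_int m * s, s) \<in> M"
    using total_coneD(3)[OF bdloc_affine'[OF assms(1), of m n]] by (auto simp: loc_neg_def)
  then show False using cone_char_ge[OF assms(1,2)] assms(3) by fastforce
qed

lemma cone_char_greater_imp:
  assumes "(r, s) \<in> Rbd" "n > 0" "real_of_int m / real_of_int n < cone_char (r, s)"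
  shows "(of_int n * r - of_int m * s, s) \<in> M"
proof (rule ccontr)
  assume "(of_int n * r - of_int m * s, s) \<notin> M"
  then have "(of_int m * s - of_int n * r, s) \<in> M"
    using total_coneD(3)[OF bdloc_affine[OF assms(1), of n m]] by (auto simp: loc_neg_def)
  then show False using cone_char_le[OF assms(1,2)] assms(3) by fastforce
qed

lemma cone_char_loc_eq:
  assumes x: "x \<in> Rbd" and y: "y \<in> Rbd" and e: "loc_eq x y"
  shows "cone_char x = cone_char y"
proof -
  obtain r s r' s' where xy: "x = (r, s)" "y = (r', s')" by (metis surj_pair)
  have "(of_int n * r - of_int m * s, s) \<in> M \<longleftrightarrow> (of_int n * r' - of_int m * s', s') \<in> M" for n m
  proof -
    have "(of_int n * r - of_int m * s) * s' = of_int n * (r * s') - of_int m * s * s'"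
      by (simp add: algebra_simps)
    also have "\<dots> = (of_int n * r' - of_int m * s') * s"
      using e unfolding xy loc_eq_def by (simp add: algebra_simps)
    finally have "loc_eq (of_int n * r - of_int m * s, s) (of_int n * r' - of_int m * s', s')"
      unfolding loc_eq_def by simp
    then show ?thesis using M_loc_eq bdloc_affine x y loc_eq_sym unfolding xy by metis
  qed
  then have "cone_lower_cut x = cone_lower_cut y" unfolding cone_lower_cut_def xy by auto
  then show ?thesis unfolding cone_char_def using x y by simp
qed

lemma cone_char_of_int: "cone_char (of_int c, 1) = of_int c"
proof -
  have "(of_int 1 * of_int c - of_int c * 1, 1) \<in> M" "(of_int c * 1 - of_int 1 * of_int c, 1) \<in> M"
    using M_of_int[of 0] by simp_all
  then show ?thesis
    using cone_char_ge[OF bdloc_of_int, of 1 c c] cone_char_le[OF bdloc_of_int, of 1 c c] by simp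
qed

lemma cone_char_nonneg: assumes "x \<in> M" shows "cone_char x \<ge> 0"
proof -
  obtain r s where x: "x = (r, s)" by (metis surj_pair)
  have "(of_int 1 * r - of_int 0 * s, s) \<in> M" using assms x by simp
  then show ?thesis using cone_char_ge[of r s 1 0] M_sub assms x by auto
qed

lemma cone_char_add:
  assumes x: "(r, s) \<in> Rbd" and y: "(r', s') \<in> Rbd"
  shows "cone_char (r * s' + r' * s, s * s') = cone_char (r, s) + cone_char (r', s')"
proof -
  have xy: "(r * s' + r' * s, s * s') \<in> Rbd" using bdloc_add[OF x y] .
  have "cone_char (r, s) + cone_char (r', s') \<le> cone_char (r * s' + r' * s, s * s')"
  proof (rule add_le_if_rationals_below)
    fix q1 q2 :: real assume q: "q1 \<in> \<rat>" "q2 \<in> \<rat>" "q1 < cone_char (r, s)" "q2 < cone_char (r', s')"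
    obtain M1 M2 N where N: "N > 0" "q1 = of_int M1 / of_int N" "q2 = of_int M2 / of_int N"
      using Rats_common_denominator[OF q(1,2)] by blast
    have "loc_add (of_int N * r - of_int M1 * s, s) (of_int N * r' - of_int M2 * s', s') \<in> M"
      using cone_char_greater_imp[OF x N(1)] cone_char_greater_imp[OF y N(1)] q N
      by (intro M_add) auto
    then have "(of_int N * (r * s' + r' * s) - of_int (M1 + M2) * (s * s'), s * s') \<in> M"
      by (simp add: loc_add_def algebra_simps)
    then have "real_of_int (M1 + M2) / real_of_int N \<le> cone_char (r * s' + r' * s, s * s')"
      by (rule cone_char_ge[OF xy N(1)])
    then show "q1 + q2 \<le> cone_char (r * s' + r' * s, s * s')"
      using N by (simp add: add_divide_distrib)
  qed
  moreover have "cone_char (r * s' + r' * s, s * s') \<le> cone_char (r, s) + cone_char (r', s')"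
  proof (rule le_add_if_rationals_above)
    fix q1 q2 :: real assume q: "q1 \<in> \<rat>" "q2 \<in> \<rat>" "cone_char (r, s) < q1" "cone_char (r', s') < q2"
    obtain M1 M2 N where N: "N > 0" "q1 = of_int M1 / of_int N" "q2 = of_int M2 / of_int N"
      using Rats_common_denominator[OF q(1,2)] by blast
    have "loc_add (of_int M1 * s - of_int N * r, s) (of_int M2 * s' - of_int N * r', s') \<in> M"
      using cone_char_less_imp[OF x N(1)] cone_char_less_imp[OF y N(1)] q N by (intro M_add) auto
    then have "(of_int (M1 + M2) * (s * s') - of_int N * (r * s' + r' * s), s * s') \<in> M"
      by (simp add: loc_add_def algebra_simps)
    then have "cone_char (r * s' + r' * s, s * s') \<le> real_of_int (M1 + M2) / real_of_int N"
      by (rule cone_char_le[OF xy N(1)])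
    then show "cone_char (r * s' + r' * s, s * s') \<le> q1 + q2"
      using N by (simp add: add_divide_distrib)
  qed
  ultimately show ?thesis by simp
qed

lemma cone_char_loc_add: "x \<in> Rbd \<Longrightarrow> y \<in> Rbd \<Longrightarrow> cone_char (loc_add x y) = cone_char x + cone_char y"
  using cone_char_add by (cases x, cases y) (simp add: loc_add_def)

lemma cone_char_shift:
  assumes x: "(r, s) \<in> Rbd"
  shows "cone_char (r + of_int K * s, s) = cone_char (r, s) + of_int K"
proof -
  have "loc_eq (r * 1 + of_int K * s, s * 1) (r + of_int K * s, s)" unfolding loc_eq_def by simp
  then have "cone_char (r * 1 + of_int K * s, s * 1) = cone_char (r + of_int K * s, s)"
    using cone_char_loc_eq bdloc_add[OF x bdloc_of_int] bdloc_affine[OF x, of 1 "- K"] by simp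
  then show ?thesis using cone_char_add[OF x bdloc_of_int] cone_char_of_int by simp
qed

text \<open>Uses \<open>(x - a) (y - b) + a (y - b) + b (x - a) = x y - a b\<close> with \<open>x - a, y - b, a, b \<ge> 0\<close>.\<close>
lemma cone_char_mult_ge_rat:
  assumes x: "(r, s) \<in> Rbd" and y: "(r', s') \<in> Rbd" and N: "N > 0" and M0: "M1 \<ge> 0" "M2 \<ge> 0"
    and q: "real_of_int M1 / real_of_int N < cone_char (r, s)" "real_of_int M2 / real_of_int N < cone_char (r', s')"
  shows "real_of_int M1 / real_of_int N * (real_of_int M2 / real_of_int N) \<le> cone_char (r * r', s * s')"
proof -
  define X where "X = (of_int N * r - of_int M1 * s, s)"
  define Y where "Y = (of_int N * r' - of_int M2 * s', s')"
  have "X \<in> M" "Y \<in> M"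
    unfolding X_def Y_def using cone_char_greater_imp[OF x N] cone_char_greater_imp[OF y N] q by auto
  then have "loc_add (loc_add (loc_mult X Y) (loc_mult (of_int M1, 1) Y)) (loc_mult (of_int M2, 1) X) \<in> M"
    using M_of_int M0 by (intro M_add M_mult) auto
  moreover have "loc_eq (loc_add (loc_add (loc_mult X Y) (loc_mult (of_int M1, 1) Y)) (loc_mult (of_int M2, 1) X))
     (of_int (N * N) * (r * r') - of_int (M1 * M2) * (s * s'), s * s')"
    unfolding X_def Y_def loc_eq_def loc_add_def loc_mult_def by (simp add: algebra_simps)
  ultimately have "(of_int (N * N) * (r * r') - of_int (M1 * M2) * (s * s'), s * s') \<in> M"
    using M_loc_eq bdloc_affine[OF bdloc_mult[OF x y]] by blast
  then show ?thesis using cone_char_ge[OF bdloc_mult[OF x y], of "N * N" "M1 * M2"] N by simp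
qed

text \<open>Uses \<open>b (a - x) + x (b - y) = a b - x y\<close>, which needs \<open>x \<ge> 0\<close>.\<close>
lemma cone_char_mult_le_rat:
  assumes xM: "(r, s) \<in> M" and y: "(r', s') \<in> Rbd" and N: "N > 0" and M0: "M2 \<ge> 0"
    and q: "cone_char (r, s) < real_of_int M1 / real_of_int N" "cone_char (r', s') < real_of_int M2 / real_of_int N"
  shows "cone_char (r * r', s * s') \<le> real_of_int M1 / real_of_int N * (real_of_int M2 / real_of_int N)"
proof -
  have x: "(r, s) \<in> Rbd" using xM M_sub by auto
  define X where "X = (of_int M1 * s - of_int N * r, s)"
  define Y where "Y = (of_int M2 * s' - of_int N * r', s')"
  have "X \<in> M" "Y \<in> M"
    unfolding X_def Y_def using cone_char_less_imp[OF x N] cone_char_less_imp[OF y N] q by auto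
  then have "loc_add (loc_mult (of_int M2, 1) X) (loc_mult (of_int N, 1) (loc_mult (r, s) Y)) \<in> M"
    using M_of_int M0 N xM by (intro M_add M_mult) auto
  moreover have "loc_eq (loc_add (loc_mult (of_int M2, 1) X) (loc_mult (of_int N, 1) (loc_mult (r, s) Y)))
     (of_int (M1 * M2) * (s * s') - of_int (N * N) * (r * r'), s * s')"
    unfolding X_def Y_def loc_eq_def loc_add_def loc_mult_def by (simp add: algebra_simps)
  ultimately have "(of_int (M1 * M2) * (s * s') - of_int (N * N) * (r * r'), s * s') \<in> M"
    using M_loc_eq bdloc_affine'[OF bdloc_mult[OF x y]] by blast
  then show ?thesis using cone_char_le[OF bdloc_mult[OF x y], of "N * N" "M1 * M2"] N by simp
qed

lemma cone_char_mult_nonneg: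
  assumes "x \<in> M" and "y \<in> M"
  shows "cone_char (loc_mult x y) = cone_char x * cone_char y"
proof -
  obtain r s r' s' where x_eq: "x = (r, s)" and y_eq: "y = (r', s')" by (metis surj_pair)
  have xM: "(r, s) \<in> M" and yM: "(r', s') \<in> M" using assms unfolding x_eq y_eq .
  have x: "(r, s) \<in> Rbd" and y: "(r', s') \<in> Rbd" using xM yM M_sub by auto
  have x0: "cone_char (r, s) \<ge> 0" and y0: "cone_char (r', s') \<ge> 0"
    using cone_char_nonneg xM yM by auto
  have "cone_char (r, s) * cone_char (r', s') \<le> cone_char (r * r', s * s')"
  proof (rule mult_le_if_rationals_below[OF x0 y0])
    show "cone_char (r * r', s * s') \<ge> 0"
      using cone_char_nonneg M_mult[OF xM yM] by (simp add: loc_mult_def)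
    fix q1 q2 :: real
    assume q: "q1 \<in> \<rat>" "q2 \<in> \<rat>" "0 \<le> q1" "q1 < cone_char (r, s)" "0 \<le> q2" "q2 < cone_char (r', s')"
    obtain M1 M2 N where N: "N > 0" "q1 = of_int M1 / of_int N" "q2 = of_int M2 / of_int N"
      using Rats_common_denominator[OF q(1,2)] by blast
    moreover have "M1 \<ge> 0" "M2 \<ge> 0" using q(3,5) N by (auto simp: zero_le_divide_iff)
    ultimately show "q1 * q2 \<le> cone_char (r * r', s * s')"
      using cone_char_mult_ge_rat[OF x y] q(4,6) by simp
  qed
  moreover have "cone_char (r * r', s * s') \<le> cone_char (r, s) * cone_char (r', s')"
  proof (rule le_mult_if_rationals_above[OF x0 y0])
    fix q1 q2 :: real assume q: "q1 \<in> \<rat>" "q2 \<in> \<rat>" "cone_char (r, s) < q1" "cone_char (r', s') < q2"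
    obtain M1 M2 N where N: "N > 0" "q1 = of_int M1 / of_int N" "q2 = of_int M2 / of_int N"
      using Rats_common_denominator[OF q(1,2)] by blast
    moreover have "M2 \<ge> 0"
    proof -
      have "real_of_int M2 / real_of_int N > 0" using q(4) y0 N(3) by linarith
      then show ?thesis using N(1) by (simp add: zero_less_divide_iff)
    qed
    ultimately show "cone_char (r * r', s * s') \<le> q1 * q2"
      using cone_char_mult_le_rat[OF xM y] q(3,4) by simp
  qed
  ultimately show ?thesis by (simp add: x_eq y_eq loc_mult_def)
qed

text \<open>With \<open>x + K, y + K \<in> M\<close>: \<open>(x + K) (y + K) + K\<^sup>2 = x y + K (x + K) + K (y + K)\<close>.\<close>
lemma cone_char_mult:
  assumes x: "(r, s) \<in> Rbd" and y: "(r', s') \<in> Rbd"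
  shows "cone_char (r * r', s * s') = cone_char (r, s) * cone_char (r', s')"
proof -
  obtain n where n: "pos (r + of_nat n * s)" using x by (auto elim: bdlocE)
  obtain n' where n': "pos (r' + of_nat n' * s')" using y by (auto elim: bdlocE)
  define K :: int where "K = int (n + n')"
  have "pos ((r + of_nat n * s) + of_nat n' * s)" "pos ((r' + of_nat n' * s') + of_nat n * s')"
    using n n' Loc_pos[OF bdloc_Loc[OF x]] Loc_pos[OF bdloc_Loc[OF y]] pos_of_nat pos_mult pos_add
    by metis+
  then have PK: "pos (r + of_int K * s)" "pos (r' + of_int K * s')"
    unfolding K_def by (simp_all add: algebra_simps)
  define xK yK where "xK = (r + of_int K * s, s)" and "yK = (r' + of_int K * s', s')"
  have bK: "xK \<in> Rbd" "yK \<in> Rbd"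
    unfolding xK_def yK_def
    using bdloc_affine[OF x, of 1 "- K"] bdloc_affine[OF y, of 1 "- K"] by simp_all
  have MK: "xK \<in> M" "yK \<in> M" "(of_int K, 1) \<in> M"
    using M_pos bK PK M_of_int[of K] unfolding xK_def yK_def K_def loc_pos_def by auto
  have char_K: "cone_char xK = cone_char (r, s) + of_int K" "cone_char yK = cone_char (r', s') + of_int K"
    unfolding xK_def yK_def using cone_char_shift[OF x] cone_char_shift[OF y] by simp_all
  have KK: "(of_int K * of_int K, 1) \<in> Rbd" using bdloc_of_int[of "K * K"] by simp
  define L where "L = loc_add (loc_mult xK yK) (of_int K * of_int K, 1)"
  define R where
    "R = loc_add (loc_add (loc_mult (r, s) (r', s')) (loc_mult (of_int K, 1) xK)) (loc_mult (of_int K, 1) yK)"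
  have "loc_eq L R"
    unfolding L_def R_def xK_def yK_def loc_eq_def loc_add_def loc_mult_def
    by (simp add: algebra_simps)
  moreover have "L \<in> Rbd" unfolding L_def by (intro bdloc_loc_add bdloc_loc_mult bK KK)
  moreover have "R \<in> Rbd"
    unfolding R_def by (intro bdloc_loc_add bdloc_loc_mult x y bK bdloc_of_int)
  ultimately have "cone_char L = cone_char R" by (rule cone_char_loc_eq[rotated 2])
  moreover have "cone_char L = (cone_char (r, s) + of_int K) * (cone_char (r', s') + of_int K) + of_int K * of_int K"
    unfolding L_def
    using cone_char_loc_add[OF bdloc_loc_mult[OF bK] KK] cone_char_mult_nonneg[OF MK(1,2)]
      char_K cone_char_of_int[of "K * K"] by simp
  moreover have "cone_char R = cone_char (r * r', s * s') + of_int K * (cone_char (r, s) + of_int K)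
      + of_int K * (cone_char (r', s') + of_int K)"
  proof -
    have "loc_mult (r, s) (r', s') \<in> Rbd" "loc_mult (of_int K, 1) xK \<in> Rbd" "loc_mult (of_int K, 1) yK \<in> Rbd"
      by (intro bdloc_loc_mult x y bK bdloc_of_int)+
    then have "cone_char R = cone_char (loc_mult (r, s) (r', s')) + cone_char (loc_mult (of_int K, 1) xK)
        + cone_char (loc_mult (of_int K, 1) yK)"
      unfolding R_def by (simp add: cone_char_loc_add bdloc_loc_add)
    then show ?thesis
      using cone_char_mult_nonneg[OF MK(3) MK(1)] cone_char_mult_nonneg[OF MK(3) MK(2)] char_K
        cone_char_of_int[of K] by (simp add: loc_mult_def)
  qed
  ultimately show ?thesis by (simp add: algebra_simps)
qed

lemma cone_char_in_Kset: "cone_char \<in> Kset le"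
proof -
  have "cone_char (loc_mult a b) = cone_char a * cone_char b" if "a \<in> Rbd" "b \<in> Rbd" for a b
    using that cone_char_mult by (cases a, cases b) (simp add: loc_mult_def)
  moreover have "cone_char a \<ge> 0" if "a \<in> Rbd" "loc_le le (0, 1) a" for a
  proof -
    have "a \<in> M" using that M_pos unfolding loc_le_def loc_pos_def by auto
    then show ?thesis by (rule cone_char_nonneg)
  qed
  ultimately show ?thesis
    unfolding Kset_def using cone_char_loc_eq cone_char_of_int[of 1] cone_char_loc_add
    by (auto simp: cone_char_def)
qed

end

theorem positivstellensatz:
  assumes x: "(r, u) \<in> Rbd" and nonneg: "\<And>\<psi>. \<psi> \<in> Kset le \<Longrightarrow> \<psi> (r, u) \<ge> 0"
  shows "pos r"
proof (rule ccontr)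
  assume "\<not> pos r"
  then obtain k :: nat where k: "k \<ge> 1" "\<not> pos (of_nat k * r + u)"
    using archimedean_pos[of r u] by blast
  have eq: "of_int (- int k) * r - of_int 1 * u = - (of_nat k * r + u)"
    "of_int (- 1) * u - of_int (int k) * r = - (of_nat k * r + u)" by simp_all
  obtain M where M: "total_cone M" "(- (of_nat k * r + u), u) \<in> M"
    using total_cone_containing bdloc_affine[OF x, of "- int k" 1] k(2) unfolding eq(1) by blast
  have "(of_int (- 1) * u - of_int (int k) * r, u) \<in> M" using M(2) unfolding eq(2) .
  then have "cone_char M (r, u) \<le> real_of_int (- 1) / real_of_int (int k)"
    using cone_char_le[OF M(1) x, of "int k" "- 1"] k(1) by simp
  moreover have "real_of_int (- 1) / real_of_int (int k) < 0" using k(1) by simp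
  moreover have "cone_char M (r, u) \<ge> 0" using nonneg cone_char_in_Kset[OF M(1)] by blast
  ultimately show False by linarith
qed


section \<open>Density of the sets \<open>O\<^sub>s\<^sub><\<^sub>\<infinity>\<close>\<close>

text \<open>With \<open>m = \<lfloor>N \<psi>\<^sub>0(r/t)\<rfloor>\<close>, the square of \<open>(N r - m t)/t\<close> has value at most \<open>1\<close> at \<open>\<psi>\<^sub>0\<close> but is large
  wherever \<open>\<psi>(r/t)\<close> is \<open>\<epsilon>\<close>-far from \<open>\<psi>\<^sub>0(r/t)\<close>.\<close>
lemma square_large_off_center:
  assumes \<psi>0: "\<psi>0 \<in> Kset le" and \<epsilon>: "\<epsilon> > 0" and rt: "(r, t) \<in> Rbd"
  obtains X where "(X * X, t * t) \<in> Rbd" "\<psi>0 (X * X, t * t) \<le> 1"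
    "\<And>\<psi>. \<psi> \<in> Kset le \<Longrightarrow> \<bar>\<psi> (r, t) - \<psi>0 (r, t)\<bar> \<ge> \<epsilon> \<Longrightarrow> \<psi> (X * X, t * t) \<ge> L"
proof -
  obtain N :: nat where N: "(sqrt \<bar>L\<bar> + 1) / \<epsilon> < real N" using reals_Archimedean2 by blast
  then have NL: "real N * \<epsilon> > sqrt \<bar>L\<bar> + 1" using \<epsilon> by (simp add: divide_less_eq)
  define m where "m = \<lfloor>real N * \<psi>0 (r, t)\<rfloor>"
  have m: "real_of_int m \<le> real N * \<psi>0 (r, t)" "real N * \<psi>0 (r, t) < real_of_int m + 1"
    unfolding m_def by linarith+
  define X where "X = of_int (int N) * r - of_int m * t"
  have XB: "(X, t) \<in> Rbd" unfolding X_def using bdloc_affine[OF rt] .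
  have sq: "\<psi> (X * X, t * t) = (real N * \<psi> (r, t) - real_of_int m)\<^sup>2" if "\<psi> \<in> Kset le" for \<psi>
    using Kset_mult_frac[OF that XB XB] Kset_affine[OF that rt, of "int N" m]
    unfolding X_def by (simp add: power2_eq_square)
  show ?thesis
  proof
    show "(X * X, t * t) \<in> Rbd" using bdloc_mult[OF XB XB] .
    have "(real N * \<psi>0 (r, t) - real_of_int m)\<^sup>2 \<le> 1"
      using m
      by (intro power_le_one_iff[THEN iffD2] abs_square_le_1[THEN iffD2]) (auto simp: abs_le_iff)
    then show "\<psi>0 (X * X, t * t) \<le> 1" using sq[OF \<psi>0] by simp
  next
    fix \<psi> assume \<psi>: "\<psi> \<in> Kset le" and far: "\<bar>\<psi> (r, t) - \<psi>0 (r, t)\<bar> \<ge> \<epsilon>"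
    have "\<bar>real N * \<psi> (r, t) - real N * \<psi>0 (r, t)\<bar> = real N * \<bar>\<psi> (r, t) - \<psi>0 (r, t)\<bar>"
      by (simp add: abs_mult right_diff_distrib[symmetric])
    also have "\<dots> \<ge> real N * \<epsilon>" using far by (simp add: mult_left_mono)
    finally have "\<bar>real N * \<psi> (r, t) - real_of_int m\<bar> \<ge> sqrt \<bar>L\<bar>" using NL m by linarith
    then have "(real N * \<psi> (r, t) - real_of_int m)\<^sup>2 \<ge> (sqrt \<bar>L\<bar>)\<^sup>2"
      by (metis abs_ge_zero power2_abs power_mono real_sqrt_ge_zero)
    then show "\<psi> (X * X, t * t) \<ge> L" using sq[OF \<psi>] by simp
  qed
qed

lemma pos_large_outside_box_insert:
  assumes \<psi>0: "\<psi>0 \<in> Kset le" and \<epsilon>: "\<epsilon> > 0" and b: "(b, d) \<in> Rbd" "pos b"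
    and bL: "\<And>\<psi>. \<psi> \<in> Kset le \<Longrightarrow> \<exists>j\<in>F. \<bar>\<psi> j - \<psi>0 j\<bar> \<ge> \<epsilon> \<Longrightarrow> \<psi> (b, d) \<ge> L"
  obtains b' d' where "(b', d') \<in> Rbd" "pos b'" "\<psi>0 (b', d') \<le> \<psi>0 (b, d) + 1"
    "\<And>\<psi>. \<psi> \<in> Kset le \<Longrightarrow> \<exists>j\<in>insert i F. \<bar>\<psi> j - \<psi>0 j\<bar> \<ge> \<epsilon> \<Longrightarrow> \<psi> (b', d') \<ge> L"
proof (cases "i \<in> Rbd")
  case False
  then have "\<bar>\<psi> i - \<psi>0 i\<bar> < \<epsilon>" if "\<psi> \<in> Kset le" for \<psi>
    using Kset_outside[OF that] Kset_outside[OF \<psi>0] \<epsilon> by simp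
  then show ?thesis using that[OF b] bL by fastforce
next
  case True
  obtain r t where i: "i = (r, t)" by (metis surj_pair)
  obtain X where X: "(X * X, t * t) \<in> Rbd" "\<psi>0 (X * X, t * t) \<le> 1"
    and XL: "\<And>\<psi>. \<psi> \<in> Kset le \<Longrightarrow> \<bar>\<psi> (r, t) - \<psi>0 (r, t)\<bar> \<ge> \<epsilon> \<Longrightarrow> \<psi> (X * X, t * t) \<ge> L"
    using square_large_off_center[OF \<psi>0 \<epsilon>, of r t] True i by metis
  have sum: "\<psi> (loc_add (b, d) (X * X, t * t)) = \<psi> (b, d) + \<psi> (X * X, t * t)" if "\<psi> \<in> Kset le" for \<psi>
    using Kset_add[OF that b(1) X(1)] .
  have "loc_add (b, d) (X * X, t * t) \<in> Rbd" "pos (fst (loc_add (b, d) (X * X, t * t)))"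
    using bdloc_loc_add[OF b(1) X(1)] b(1,2) Loc_pos bdloc_Loc[OF b(1)] bdloc_Loc[OF X(1)]
    by (auto simp: loc_add_def intro!: pos_add_mult pos_square)
  moreover have "\<psi>0 (loc_add (b, d) (X * X, t * t)) \<le> \<psi>0 (b, d) + 1" using sum[OF \<psi>0] X(2) by simp
  moreover have "\<psi> (loc_add (b, d) (X * X, t * t)) \<ge> L"
    if \<psi>: "\<psi> \<in> Kset le" and "\<exists>j\<in>insert i F. \<bar>\<psi> j - \<psi>0 j\<bar> \<ge> \<epsilon>" for \<psi>
    using that sum[OF \<psi>] bL[OF \<psi>] XL[OF \<psi>] Kset_nonneg[OF \<psi> b] Kset_nonneg[OF \<psi> X(1) pos_square]
    unfolding i by force
  ultimately show ?thesis using that by (metis prod.collapse)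
qed

lemma pos_large_outside_box:
  assumes \<psi>0: "\<psi>0 \<in> Kset le" and \<epsilon>: "\<epsilon> > 0" and F: "finite F"
  obtains b d where "(b, d) \<in> Rbd" "pos b" "\<psi>0 (b, d) \<le> real (card F)"
    "\<And>\<psi>. \<psi> \<in> Kset le \<Longrightarrow> \<exists>i\<in>F. \<bar>\<psi> i - \<psi>0 i\<bar> \<ge> \<epsilon> \<Longrightarrow> \<psi> (b, d) \<ge> L"
proof -
  have "\<exists>b d. (b, d) \<in> Rbd \<and> pos b \<and> \<psi>0 (b, d) \<le> real (card F) \<and>
     (\<forall>\<psi>\<in>Kset le. (\<exists>i\<in>F. \<bar>\<psi> i - \<psi>0 i\<bar> \<ge> \<epsilon>) \<longrightarrow> \<psi> (b, d) \<ge> L)"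
    using F
  proof (induction F rule: finite_induct)
    case empty
    show ?case
      using bdloc_of_int[of 0] Kset_of_int[OF \<psi>0, of 0] pos_0
      by (intro exI[of _ 0] exI[of _ 1]) simp
  next
    case (insert i F)
    then obtain b d where b: "(b, d) \<in> Rbd" "pos b" "\<psi>0 (b, d) \<le> real (card F)"
      and bL: "\<And>\<psi>. \<psi> \<in> Kset le \<Longrightarrow> \<exists>j\<in>F. \<bar>\<psi> j - \<psi>0 j\<bar> \<ge> \<epsilon> \<Longrightarrow> \<psi> (b, d) \<ge> L"
      by blast
    obtain b' d' where "(b', d') \<in> Rbd" "pos b'" "\<psi>0 (b', d') \<le> \<psi>0 (b, d) + 1"
      "\<And>\<psi>. \<psi> \<in> Kset le \<Longrightarrow> \<exists>j\<in>insert i F. \<bar>\<psi> j - \<psi>0 j\<bar> \<ge> \<epsilon> \<Longrightarrow> \<psi> (b', d') \<ge> L"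
      using pos_large_outside_box_insert[OF \<psi>0 \<epsilon> b(1,2), of F L i] bL by blast
    then show ?case using b(3) insert.hyps by (intro exI[of _ b'] exI[of _ d']) auto
  qed
  then show ?thesis using that by blast
qed

text \<open>If \<open>\<psi>(1/s)\<close> vanished near \<open>\<psi>\<^sub>0\<close>, then \<open>(1/s) (b/d - L)\<close> would be nonnegative at every character,
  hence nonnegative by the Positivstellensatz, contradicting its value at \<open>\<psi>\<^sub>0\<close>.\<close>
lemma Ofin_meets_box:
  assumes s: "s \<in> Loc le" and \<psi>0: "\<psi>0 \<in> Kset le" and \<epsilon>: "\<epsilon> > 0" and F: "finite F"
  obtains \<psi> where "\<psi> \<in> Kset le" "\<psi> (1, s) > 0" "\<forall>i\<in>F. \<bar>\<psi> i - \<psi>0 i\<bar> < \<epsilon>"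
proof (rule ccontr)
  note found = that
  assume "\<not> thesis"
  then have near: "\<psi> (1, s) \<le> 0" if \<psi>: "\<psi> \<in> Kset le" and box: "\<forall>i\<in>F. \<bar>\<psi> i - \<psi>0 i\<bar> < \<epsilon>" for \<psi>
    using found[OF \<psi> _ box] by force
  define L :: int where "L = int (card F) + 1"
  obtain b d where b: "(b, d) \<in> Rbd" "pos b" "\<psi>0 (b, d) \<le> real (card F)"
    and bL: "\<And>\<psi>. \<psi> \<in> Kset le \<Longrightarrow> \<exists>i\<in>F. \<bar>\<psi> i - \<psi>0 i\<bar> \<ge> \<epsilon> \<Longrightarrow> \<psi> (b, d) \<ge> real_of_int L"
    using pos_large_outside_box[OF \<psi>0 \<epsilon> F] by blast
  define Y where "Y = (of_int 1 * b - of_int L * d, d)"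
  have Y: "Y \<in> Rbd" unfolding Y_def using bdloc_affine[OF b(1)] .
  have Y_val: "\<psi> Y = \<psi> (b, d) - of_int L" if "\<psi> \<in> Kset le" for \<psi>
    unfolding Y_def using Kset_affine[OF that b(1), of 1 L] by simp
  have "\<psi> (loc_mult (1, s) Y) \<ge> 0" if \<psi>: "\<psi> \<in> Kset le" for \<psi>
  proof -
    have "\<psi> (loc_mult (1, s) Y) = \<psi> (1, s) * (\<psi> (b, d) - of_int L)"
      using Kset_mult[OF \<psi> bdloc_inverse[OF s] Y] Y_val[OF \<psi>] by simp
    moreover have "\<psi> (1, s) \<ge> 0" using Kset_inverse_nonneg[OF \<psi> s] .
    moreover have "\<psi> (1, s) = 0 \<or> \<psi> (b, d) \<ge> real_of_int L"
      using near[OF \<psi>] bL[OF \<psi>] \<open>\<psi> (1, s) \<ge> 0\<close> by force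
    ultimately show ?thesis by auto
  qed
  then have "pos (b - of_int L * d)"
    using positivstellensatz[of "fst (loc_mult (1, s) Y)" "snd (loc_mult (1, s) Y)"]
      bdloc_loc_mult[OF bdloc_inverse[OF s] Y] unfolding Y_def loc_mult_def by simp
  then have "\<psi>0 Y \<ge> 0" using Kset_nonneg[OF \<psi>0] Y unfolding Y_def by simp
  then show False using Y_val[OF \<psi>0] b(3) unfolding L_def by simp
qed

lemma eval_continuous: "continuous_map (subtopology (Ktop le) V) euclideanreal (\<lambda>\<psi>. \<psi> a)"
proof -
  have "continuous_on (Kset le \<inter> V) (\<lambda>\<psi> :: 'a \<times> 'a \<Rightarrow> real. \<psi> a)"
    by (rule continuous_on_subset[OF continuous_on_product_coordinates]) simp
  then show ?thesis
    unfolding Ktop_def by (simp add: subtopology_subtopology continuous_map_iff_continuous)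
qed

lemma Ofin_open: "openin (Ktop le) (Ofin le s)"
proof -
  have "open {\<psi> :: 'a \<times> 'a \<Rightarrow> real. 0 < \<psi> (1, s)}"
    by (rule open_Collect_less) (simp_all add: continuous_on_const continuous_on_product_coordinates)
  moreover have "Ofin le s = {\<psi>. 0 < \<psi> (1, s)} \<inter> Kset le" unfolding Ofin_def by auto
  ultimately show ?thesis unfolding Ktop_def openin_subtopology using open_openin by blast
qed

lemma Ofin_dense: assumes s: "s \<in> Loc le" shows "Ktop le closure_of Ofin le s = topspace (Ktop le)"
  unfolding dense_intersects_open
proof (intro allI impI)
  fix T assume T: "openin (Ktop le) T \<and> T \<noteq> {}"
  obtain U where U: "open U" "T = U \<inter> Kset le"
    using T unfolding Ktop_def openin_subtopology using open_openin by blast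
  obtain \<psi>0 where "\<psi>0 \<in> T" using T by blast
  then have \<psi>0: "\<psi>0 \<in> Kset le" "\<psi>0 \<in> U" using U by auto
  have "openin (product_topology (\<lambda>i. euclidean) UNIV) U" using U(1) unfolding open_fun_def .
  then obtain X where X: "\<psi>0 \<in> (\<Pi>\<^sub>E i\<in>UNIV. X i)" "\<And>i. openin euclidean (X i)"
    "finite {i. X i \<noteq> topspace euclidean}" "(\<Pi>\<^sub>E i\<in>UNIV. X i) \<subseteq> U"
    using product_topology_open_contains_basis[OF _ \<psi>0(2)] by blast
  define F where "F = {i. X i \<noteq> UNIV}"
  have F: "finite F" using X(3) unfolding F_def by simp
  have "\<exists>e>0. ball (\<psi>0 i) e \<subseteq> X i" for i
  proof -
    have "open (X i)" using X(2)[of i] open_openin by blast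
    moreover have "\<psi>0 i \<in> X i" using X(1) by auto
    ultimately show ?thesis using open_contains_ball by blast
  qed
  then obtain e where e: "\<And>i. e i > 0" "\<And>i. ball (\<psi>0 i) (e i) \<subseteq> X i" by metis
  define \<epsilon> where "\<epsilon> = Min (insert 1 (e ` F))"
  have \<epsilon>: "\<epsilon> > 0" unfolding \<epsilon>_def using F e(1) by (subst Min_gr_iff) auto
  have \<epsilon>_le: "\<epsilon> \<le> e i" if "i \<in> F" for i unfolding \<epsilon>_def using F that by (intro Min_le) auto
  obtain \<psi> where \<psi>: "\<psi> \<in> Kset le" "\<psi> (1, s) > 0" "\<forall>i\<in>F. \<bar>\<psi> i - \<psi>0 i\<bar> < \<epsilon>"
    using Ofin_meets_box[OF s \<psi>0(1) \<epsilon> F] by blast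
  have "\<psi> i \<in> X i" for i
  proof (cases "i \<in> F")
    case True
    then have "\<psi> i \<in> ball (\<psi>0 i) (e i)"
      using \<psi>(3) \<epsilon>_le[OF True] by (auto simp: dist_real_def abs_minus_commute)
    then show ?thesis using e(2) by blast
  qed (auto simp: F_def)
  then have "\<psi> \<in> T" using X(4) U \<psi>(1) by (auto simp: PiE_iff)
  moreover have "\<psi> \<in> Ofin le s" unfolding Ofin_def using \<psi> by auto
  ultimately show "Ofin le s \<inter> T \<noteq> {}" by blast
qed

section \<open>The maximal representatives of \<open>r\<close>-hat\<close>

definition bd_den :: "'a \<Rightarrow> 'a" where
  "bd_den r = (SOME s. s \<in> Loc le \<and> (r, s) \<in> Rbd)"

lemma bd_den: "bd_den r \<in> Loc le" "(r, bd_den r) \<in> Rbd"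
proof -
  obtain t where "t \<in> Loc le" "pos (r + t)" "pos (t - r)" by (rule localizable_bound)
  then have "\<exists>s. s \<in> Loc le \<and> (r, s) \<in> Rbd" by (intro exI[of _ t]) (auto intro: bdlocI[where n = 1])
  then show "bd_den r \<in> Loc le" "(r, bd_den r) \<in> Rbd"
    unfolding bd_den_def by (metis (mono_tags, lifting) someI_ex)+
qed

lemma hat_rep_eq:
  "hat_rep le r = (Ofin le (bd_den r), \<lambda>\<psi>. if \<psi> \<in> Ofin le (bd_den r) then r_s r (bd_den r) \<psi> else 0)"
  unfolding hat_rep_def bd_den_def Let_def by simp

lemma r_s_continuous: "continuous_map (subtopology (Ktop le) (Ofin le s)) euclideanreal (r_s r s)"
  unfolding r_s_def
proof (intro continuous_map_real_mult continuous_map_real_inverse eval_continuous)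
  fix \<psi> assume "\<psi> \<in> topspace (subtopology (Ktop le) (Ofin le s))"
  then show "\<psi> (1, s) \<noteq> 0" unfolding Ofin_def by auto
qed

lemma hat_rep_ae_rep: "ae_rep (Ktop le) (fst (hat_rep le r)) (snd (hat_rep le r))"
  unfolding hat_rep_eq
  using ae_rep_zero_extension[OF Ofin_open Ofin_dense[OF bd_den(1)] r_s_continuous] by simp

abbreviation hdom :: "'a \<Rightarrow> ('a \<times> 'a \<Rightarrow> real) set" where "hdom r \<equiv> fst (hat_max le r)"
abbreviation hval :: "'a \<Rightarrow> ('a \<times> 'a \<Rightarrow> real) \<Rightarrow> real" where "hval r \<equiv> snd (hat_max le r)"

lemma hat_max_ae_rep: "ae_rep (Ktop le) (hdom r) (hval r)"
  unfolding hat_max_def using ae_max_maximal_rep(1)[OF hat_rep_ae_rep] by simp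

lemma hdom_open: "openin (Ktop le) (hdom r)"
  and hdom_dense: "Ktop le closure_of (hdom r) = topspace (Ktop le)"
  and hval_continuous: "continuous_map (subtopology (Ktop le) (hdom r)) euclideanreal (hval r)"
  using hat_max_ae_rep[of r] unfolding ae_rep_def by auto

lemma r_s_indep:
  assumes "(r, s) \<in> Rbd" "(r, s') \<in> Rbd" "\<psi> \<in> Ofin le s" "\<psi> \<in> Ofin le s'"
  shows "r_s r s \<psi> = r_s r s' \<psi>"
proof -
  have \<psi>: "\<psi> \<in> Kset le" "\<psi> (1, s) > 0" "\<psi> (1, s') > 0" using assms(3,4) unfolding Ofin_def by auto
  have "\<psi> (r, s) * \<psi> (1, s') = \<psi> (r * 1, s * s')" "\<psi> (r, s') * \<psi> (1, s) = \<psi> (r * 1, s' * s)"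
    using Kset_mult_frac[OF \<psi>(1) assms(1) bdloc_inverse] Kset_mult_frac[OF \<psi>(1) assms(2) bdloc_inverse]
      bdloc_Loc[OF assms(1)] bdloc_Loc[OF assms(2)] by simp_all
  then have "\<psi> (r, s) * \<psi> (1, s') = \<psi> (r, s') * \<psi> (1, s)" by (simp add: mult.commute)
  then show ?thesis unfolding r_s_def using \<psi> by (simp add: field_simps)
qed

lemma hval_eq_r_s:
  assumes s: "(r, s) \<in> Rbd"
  obtains W where "openin (Ktop le) W" "Ktop le closure_of W = topspace (Ktop le)"
    "W \<subseteq> hdom r" "W \<subseteq> Ofin le s" "\<forall>\<psi>\<in>W. hval r \<psi> = r_s r s \<psi>"
proof -
  have "ae_eq (Ktop le) (hat_max le r) (fst (hat_rep le r), snd (hat_rep le r))"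
    unfolding hat_max_def using ae_max_maximal_rep(2)[OF hat_rep_ae_rep] by simp
  then obtain W where W: "openin (Ktop le) W" "Ktop le closure_of W = topspace (Ktop le)"
    "W \<subseteq> hdom r \<inter> Ofin le (bd_den r)" "\<forall>\<psi>\<in>W. hval r \<psi> = snd (hat_rep le r) \<psi>"
    unfolding ae_eq_def hat_rep_eq by auto
  show ?thesis
  proof (rule that[of "W \<inter> Ofin le s"])
    show "openin (Ktop le) (W \<inter> Ofin le s)" using W(1) Ofin_open by blast
    show "Ktop le closure_of (W \<inter> Ofin le s) = topspace (Ktop le)"
      using dense_openin_Int[OF W(1,2) Ofin_dense[OF bdloc_Loc[OF s]]] .
    show "W \<inter> Ofin le s \<subseteq> hdom r" "W \<inter> Ofin le s \<subseteq> Ofin le s" using W(3) by blast+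
    show "\<forall>\<psi>\<in>W \<inter> Ofin le s. hval r \<psi> = r_s r s \<psi>"
      using W(3,4) r_s_indep[OF bd_den(2) s] unfolding hat_rep_eq by auto
  qed
qed

lemma hat_max_maximal:
  assumes rep: "ae_rep (Ktop le) V g" and s: "(r, s) \<in> Rbd"
    and W: "openin (Ktop le) W" "Ktop le closure_of W = topspace (Ktop le)" "W \<subseteq> V" "W \<subseteq> Ofin le s"
    and agree: "\<forall>\<psi>\<in>W. g \<psi> = r_s r s \<psi>"
  shows "V \<subseteq> hdom r \<and> (\<forall>\<psi>\<in>V. hval r \<psi> = g \<psi>)"
proof -
  define W' where "W' = W \<inter> Ofin le (bd_den r)"
  have "openin (Ktop le) W'" unfolding W'_def using W(1) Ofin_open by blast
  moreover have "Ktop le closure_of W' = topspace (Ktop le)"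
    unfolding W'_def using dense_openin_Int[OF W(1,2) Ofin_dense[OF bd_den(1)]] .
  moreover have "W' \<subseteq> V \<inter> fst (hat_rep le r)" unfolding W'_def hat_rep_eq using W(3) by auto
  moreover have "g \<psi> = snd (hat_rep le r) \<psi>" if "\<psi> \<in> W'" for \<psi>
    using that agree W(4) r_s_indep[OF s bd_den(2)] unfolding W'_def hat_rep_eq by auto
  ultimately have "ae_eq (Ktop le) (V, g) (fst (hat_rep le r), snd (hat_rep le r))"
    unfolding ae_eq_def by auto
  then show ?thesis unfolding hat_max_def using ae_max_maximal_rep(3)[OF hat_rep_ae_rep rep] by simp
qed

lemma Ofin_one: "Ofin le 1 = Kset le"
  unfolding Ofin_def using Kset_one by force

lemma hat_of_int: "Kset le \<subseteq> hdom (of_int c) \<and> (\<forall>\<psi>\<in>Kset le. hval (of_int c) \<psi> = of_int c)"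
proof -
  have top: "topspace (Ktop le) = Kset le" unfolding Ktop_def by simp
  have rep: "ae_rep (Ktop le) (Kset le) (\<lambda>\<psi>. if \<psi> \<in> Kset le then of_int c else 0)"
    using ae_rep_zero_extension[of "Ktop le" "Kset le" "\<lambda>_. of_int c"] top
    by (metis closure_of_topspace continuous_map_const openin_topspace topspace_euclidean UNIV_I)
  have "\<forall>\<psi>\<in>Kset le. (if \<psi> \<in> Kset le then of_int c else 0) = r_s (of_int c) 1 \<psi>"
    unfolding r_s_def using Kset_one Kset_of_int by simp
  then show ?thesis
    using hat_max_maximal[OF rep bdloc_of_int, of "Kset le"] top Ofin_one
    by (metis closure_of_topspace openin_topspace order_refl)
qed

lemma Ofin_mult:
  assumes "\<psi> \<in> Ofin le s" "\<psi> \<in> Ofin le s'" "s \<in> Loc le" "s' \<in> Loc le"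
  shows "\<psi> \<in> Ofin le (s * s')" and "\<psi> (1, s * s') = \<psi> (1, s) * \<psi> (1, s')"
proof -
  have \<psi>: "\<psi> \<in> Kset le" "\<psi> (1, s) > 0" "\<psi> (1, s') > 0" using assms unfolding Ofin_def by auto
  show e: "\<psi> (1, s * s') = \<psi> (1, s) * \<psi> (1, s')"
    using Kset_mult_frac[OF \<psi>(1) bdloc_inverse[OF assms(3)] bdloc_inverse[OF assms(4)]] by simp
  show "\<psi> \<in> Ofin le (s * s')" unfolding Ofin_def using \<psi> e by simp
qed

lemma r_s_add:
  assumes \<psi>: "\<psi> \<in> Ofin le s" "\<psi> \<in> Ofin le s'" and a: "(a, s) \<in> Rbd" and b: "(b, s') \<in> Rbd"
  shows "r_s (a + b) (s * s') \<psi> = r_s a s \<psi> + r_s b s' \<psi>"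
proof -
  have s: "s \<in> Loc le" "s' \<in> Loc le" using bdloc_Loc a b by auto
  have K: "\<psi> \<in> Kset le" "\<psi> (1, s) > 0" "\<psi> (1, s') > 0" using \<psi> unfolding Ofin_def by auto
  have a': "(a, s * s') \<in> Rbd" and ea: "\<psi> (a, s * s') = \<psi> (a, s) * \<psi> (1, s')"
    using bdloc_mult[OF a bdloc_inverse[OF s(2)]] Kset_mult_frac[OF K(1) a bdloc_inverse[OF s(2)]]
    by simp_all
  have b': "(b, s * s') \<in> Rbd" and eb: "\<psi> (b, s * s') = \<psi> (b, s') * \<psi> (1, s)"
    using bdloc_mult[OF b bdloc_inverse[OF s(1)]] Kset_mult_frac[OF K(1) b bdloc_inverse[OF s(1)]]
    by (simp_all add: mult.commute)
  have "\<psi> (a + b, s * s') = \<psi> (a, s) * \<psi> (1, s') + \<psi> (b, s') * \<psi> (1, s)"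
    using Kset_same_den_add[OF K(1) a' b'] ea eb by simp
  then show ?thesis unfolding r_s_def using K(2,3) Ofin_mult(2)[OF \<psi> s] by (simp add: field_simps)
qed

lemma r_s_mult:
  assumes \<psi>: "\<psi> \<in> Ofin le s" "\<psi> \<in> Ofin le s'" and a: "(a, s) \<in> Rbd" and b: "(b, s') \<in> Rbd"
  shows "r_s (a * b) (s * s') \<psi> = r_s a s \<psi> * r_s b s' \<psi>"
proof -
  have K: "\<psi> \<in> Kset le" "\<psi> (1, s) > 0" "\<psi> (1, s') > 0" using \<psi> unfolding Ofin_def by auto
  then show ?thesis unfolding r_s_def
    using Kset_mult_frac[OF K(1) a b] Ofin_mult(2)[OF \<psi> bdloc_Loc[OF a] bdloc_Loc[OF b]]
    by (simp add: field_simps)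
qed

lemma hat_binop:
  assumes bd: "\<And>s s'. (a, s) \<in> Rbd \<Longrightarrow> (b, s') \<in> Rbd \<Longrightarrow> (c, s * s') \<in> Rbd"
    and op: "\<And>\<psi> s s'. \<psi> \<in> Ofin le s \<Longrightarrow> \<psi> \<in> Ofin le s' \<Longrightarrow> (a, s) \<in> Rbd \<Longrightarrow> (b, s') \<in> Rbd \<Longrightarrow>
      r_s c (s * s') \<psi> = f (r_s a s \<psi>) (r_s b s' \<psi>)"
    and f: "continuous_map (subtopology (Ktop le) (hdom a \<inter> hdom b)) euclideanreal (\<lambda>\<psi>. f (hval a \<psi>) (hval b \<psi>))"
  shows "hdom a \<inter> hdom b \<subseteq> hdom c \<and> (\<forall>\<psi>\<in>hdom a \<inter> hdom b. hval c \<psi> = f (hval a \<psi>) (hval b \<psi>))"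
proof -
  define V where "V = hdom a \<inter> hdom b"
  have V: "openin (Ktop le) V" "Ktop le closure_of V = topspace (Ktop le)"
    unfolding V_def using hdom_open dense_openin_Int[OF hdom_open hdom_dense hdom_dense] by blast+
  have rep: "ae_rep (Ktop le) V (\<lambda>\<psi>. if \<psi> \<in> V then f (hval a \<psi>) (hval b \<psi>) else 0)"
    using ae_rep_zero_extension[OF V] f unfolding V_def by blast
  obtain Wa where Wa: "openin (Ktop le) Wa" "Ktop le closure_of Wa = topspace (Ktop le)"
    "Wa \<subseteq> hdom a" "Wa \<subseteq> Ofin le (bd_den a)" "\<forall>\<psi>\<in>Wa. hval a \<psi> = r_s a (bd_den a) \<psi>"
    by (rule hval_eq_r_s[OF bd_den(2)])
  obtain Wb where Wb: "openin (Ktop le) Wb" "Ktop le closure_of Wb = topspace (Ktop le)"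
    "Wb \<subseteq> hdom b" "Wb \<subseteq> Ofin le (bd_den b)" "\<forall>\<psi>\<in>Wb. hval b \<psi> = r_s b (bd_den b) \<psi>"
    by (rule hval_eq_r_s[OF bd_den(2)])
  have "openin (Ktop le) (Wa \<inter> Wb)" "Ktop le closure_of (Wa \<inter> Wb) = topspace (Ktop le)" "Wa \<inter> Wb \<subseteq> V"
    using Wa Wb dense_openin_Int[OF Wa(1,2) Wb(2)] unfolding V_def by blast+
  moreover have "Wa \<inter> Wb \<subseteq> Ofin le (bd_den a * bd_den b)"
    using Wa(4) Wb(4) Ofin_mult(1)[OF _ _ bd_den(1) bd_den(1)] by blast
  moreover have "\<forall>\<psi>\<in>Wa \<inter> Wb. (if \<psi> \<in> V then f (hval a \<psi>) (hval b \<psi>) else 0) = r_s c (bd_den a * bd_den b) \<psi>"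
  proof
    fix \<psi> assume \<psi>: "\<psi> \<in> Wa \<inter> Wb"
    then have "\<psi> \<in> V" "\<psi> \<in> Ofin le (bd_den a)" "\<psi> \<in> Ofin le (bd_den b)"
      using Wa(3,4) Wb(3,4) unfolding V_def by auto
    then show "(if \<psi> \<in> V then f (hval a \<psi>) (hval b \<psi>) else 0) = r_s c (bd_den a * bd_den b) \<psi>"
      using Wa(5) Wb(5) \<psi> op[OF _ _ bd_den(2) bd_den(2)] by simp
  qed
  ultimately have "V \<subseteq> hdom c \<and> (\<forall>\<psi>\<in>V. hval c \<psi> = (if \<psi> \<in> V then f (hval a \<psi>) (hval b \<psi>) else 0))"
    using hat_max_maximal[OF rep bd[OF bd_den(2) bd_den(2)]] by blast
  then show ?thesis unfolding V_def by simp
qed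

lemma hat_add:
  "hdom a \<inter> hdom b \<subseteq> hdom (a + b) \<and> (\<forall>\<psi>\<in>hdom a \<inter> hdom b. hval (a + b) \<psi> = hval a \<psi> + hval b \<psi>)"
  by (rule hat_binop[where f = "(+)"])
    (auto intro!: continuous_map_add continuous_map_from_subtopology_mono[OF hval_continuous]
      simp: bdloc_add_same_num r_s_add)

lemma hat_mult:
  "hdom a \<inter> hdom b \<subseteq> hdom (a * b) \<and> (\<forall>\<psi>\<in>hdom a \<inter> hdom b. hval (a * b) \<psi> = hval a \<psi> * hval b \<psi>)"
  by (rule hat_binop[where f = "(*)"])
    (auto intro!: continuous_map_real_mult continuous_map_from_subtopology_mono[OF hval_continuous]
      simp: bdloc_mult r_s_mult)

lemma hat_nonneg: assumes "pos a" "\<psi> \<in> hdom a" shows "hval a \<psi> \<ge> 0"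
proof -
  obtain W where W: "openin (Ktop le) W" "Ktop le closure_of W = topspace (Ktop le)"
    "W \<subseteq> hdom a" "W \<subseteq> Ofin le (bd_den a)" "\<forall>\<psi>\<in>W. hval a \<psi> = r_s a (bd_den a) \<psi>"
    by (rule hval_eq_r_s[OF bd_den(2)])
  have "r_s a (bd_den a) \<psi>' \<ge> 0" if "\<psi>' \<in> Ofin le (bd_den a)" for \<psi>'
    using that Kset_nonneg[OF _ bd_den(2) assms(1)] unfolding Ofin_def r_s_def by auto
  then show ?thesis
    using continuous_map_nonneg_on_dense[OF hdom_open W(2) hval_continuous _ assms(2)] W(4,5)
    by auto
qed

lemma hdom_mono: assumes r: "(r, s) \<in> Rbd" shows "hdom s \<subseteq> hdom r"
proof -
  have s: "s \<in> Loc le" using bdloc_Loc[OF r] .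
  have rep: "ae_rep (Ktop le) (hdom s) (\<lambda>\<psi>. if \<psi> \<in> hdom s then hval s \<psi> * \<psi> (r, s) else 0)"
    by (rule ae_rep_zero_extension[OF hdom_open hdom_dense])
      (intro continuous_map_real_mult hval_continuous eval_continuous)
  obtain W where W: "openin (Ktop le) W" "Ktop le closure_of W = topspace (Ktop le)"
    "W \<subseteq> hdom s" "W \<subseteq> Ofin le s" "\<forall>\<psi>\<in>W. hval s \<psi> = r_s s s \<psi>"
    using hval_eq_r_s bdloc_of_int_mult[OF s, of 1] by (metis mult_1 of_int_1)
  have "\<psi> (s, s) = 1" if "\<psi> \<in> W" for \<psi>
    using Kset_of_int_mult[OF _ s, of \<psi> 1] that W(4) unfolding Ofin_def by auto
  then have "\<forall>\<psi>\<in>W. (if \<psi> \<in> hdom s then hval s \<psi> * \<psi> (r, s) else 0) = r_s r s \<psi>"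
    using W(3,5) unfolding r_s_def by auto
  then show ?thesis using hat_max_maximal[OF rep r W(1-4)] by blast
qed

end

theorem proposition35:
  fixes le :: "'a::comm_ring_1 \<Rightarrow> 'a \<Rightarrow> bool" and \<phi> :: "'a \<times> 'a \<Rightarrow> real"
  assumes "po_ring le" and "archimedean_po le" and "localizable le"
    and "\<phi> \<in> Kset le"
  shows "1 \<in> dom_hat le \<phi>
      \<and> (\<forall>a\<in>dom_hat le \<phi>. \<forall>b\<in>dom_hat le \<phi>.
            a + b \<in> dom_hat le \<phi> \<and> - a \<in> dom_hat le \<phi> \<and> a * b \<in> dom_hat le \<phi>)
      \<and> phi_hat le \<phi> 1 = 1
      \<and> (\<forall>a\<in>dom_hat le \<phi>. \<forall>b\<in>dom_hat le \<phi>.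
            phi_hat le \<phi> (a + b) = phi_hat le \<phi> a + phi_hat le \<phi> b
          \<and> phi_hat le \<phi> (a * b) = phi_hat le \<phi> a * phi_hat le \<phi> b)
      \<and> (\<forall>a\<in>dom_hat le \<phi>. le 0 a \<longrightarrow> phi_hat le \<phi> a \<ge> 0)
      \<and> (\<forall>r s. s \<in> dom_hat le \<phi> \<inter> Loc le \<and> (r, s) \<in> bdloc le \<longrightarrow> r \<in> dom_hat le \<phi>)"
proof -
  interpret arch_loc_ring le using assms(1-3) by unfold_locales
  have dom: "dom_hat le \<phi> = {a. \<phi> \<in> hdom a}" and val: "phi_hat le \<phi> a = hval a \<phi>" for a
    unfolding dom_hat_def phi_hat_def by simp_all
  have one: "\<phi> \<in> hdom 1" "hval 1 \<phi> = 1" and minus_one: "\<phi> \<in> hdom (- 1)"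
    using hat_of_int[of 1] hat_of_int[of "- 1"] assms(4) by auto
  have add: "\<phi> \<in> hdom (a + b)" "hval (a + b) \<phi> = hval a \<phi> + hval b \<phi>"
    and mult: "\<phi> \<in> hdom (a * b)" "hval (a * b) \<phi> = hval a \<phi> * hval b \<phi>"
    if "\<phi> \<in> hdom a" "\<phi> \<in> hdom b" for a b
    using hat_add[of a b] hat_mult[of a b] that by auto
  have neg: "\<phi> \<in> hdom (- a)" if "\<phi> \<in> hdom a" for a
    using mult(1)[OF minus_one that] by simp
  have nonneg: "hval a \<phi> \<ge> 0" if "\<phi> \<in> hdom a" "le 0 a" for a
    using hat_nonneg that by blast
  have dom_mono: "\<phi> \<in> hdom r" if "\<phi> \<in> hdom s" "(r, s) \<in> bdloc le" for r s
    using hdom_mono that by blast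
  show ?thesis
    unfolding dom val using one add mult neg nonneg dom_mono by (intro conjI ballI allI impI) auto
qed

end
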